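(* Let $n\ge2$ and let $\mathbb{K}$ be a field with $\operatorname{char}\mathbb{K}$ either $0$ or coprime to both $n$ and $n-1$. Then the algebra $A_n=\mathbb{K}[x,y]/(y^{2n+3},\, x^ny^2-y^{n+2},\, x^{2n+1}-xy^{n+1})$ fails property (AH), i.e. the natural action of $\operatorname{Aut}(\mathfrak{m}_n)$ on the set of complementary hyperplanes of $\mathfrak{m}_n$ is not transitive.
   Context: $A_n$ is a finite-dimensional Gorenstein local algebra with maximal ideal $\mathfrak{m}_n=(x,y)$. For a finite-dimensional local algebra $A$ with maximal ideal $\mathfrak{m}$, $\operatorname{Soc}A=\{s\in A\mid s\mathfrak{m}=0\}$; $A$ is Gorenstein if $\dim \operatorname{Soc}A=1$; a complementary hyperplane is a subspace $U\subseteq\mathfrak{m}$ with $\mathfrak{m}=U\oplus\operatorname{Soc}A$. $\operatorname{Aut}(\mathfrak{m})$ is the group of automorphisms of $\mathfrak{m}$ as a (non-unital) $\mathbb{K}$-algebra. A Gorenstein algebra $A$ has property (AH) (affine homogeneity property) if $\operatorname{Aut}(\mathfrak{m})$ acts transitively on the set of complementary hyperplanes in $\mathfrak{m}$. *)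

theory Defs
  imports "HOL-Computational_Algebra.Polynomial"
begin

text \<open>K[x,y] is modelled as 'a poly poly: outer variable x, inner variable y.\<close>
type_synonym 'a bipoly = "'a poly poly"

definition varX :: "'a::field bipoly" where "varX = monom 1 1"
definition varY :: "'a::field bipoly" where "varY = [:[:0, 1:]:]"

definition const_term :: "'a::field bipoly \<Rightarrow> 'a" where
  "const_term p = coeff (coeff p 0) 0"

definition ideal3 :: "'a::field bipoly \<Rightarrow> 'a bipoly \<Rightarrow> 'a bipoly \<Rightarrow> 'a bipoly set" where
  "ideal3 g1 g2 g3 = {a * g1 + b * g2 + c * g3 | a b c. True}"

definition cls :: "'a::field bipoly set \<Rightarrow> 'a bipoly \<Rightarrow> 'a bipoly set" where
  "cls I p = {q. q - p \<in> I}"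

definition qcarrier :: "'a::field bipoly set \<Rightarrow> 'a bipoly set set" where
  "qcarrier I = range (cls I)"

definition qzero :: "'a::field bipoly set \<Rightarrow> 'a bipoly set" where
  "qzero I = cls I 0"

definition qadd :: "'a::field bipoly set \<Rightarrow> 'a bipoly set \<Rightarrow> 'a bipoly set \<Rightarrow> 'a bipoly set" where
  "qadd I A B = {q. \<exists>a\<in>A. \<exists>b\<in>B. q - (a + b) \<in> I}"

definition qmul :: "'a::field bipoly set \<Rightarrow> 'a bipoly set \<Rightarrow> 'a bipoly set \<Rightarrow> 'a bipoly set" where
  "qmul I A B = {q. \<exists>a\<in>A. \<exists>b\<in>B. q - a * b \<in> I}"

definition qsmul :: "'a::field bipoly set \<Rightarrow> 'a \<Rightarrow> 'a bipoly set \<Rightarrow> 'a bipoly set" where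
  "qsmul I c A = {q. \<exists>a\<in>A. q - smult [:c:] a \<in> I}"

definition qmax :: "'a::field bipoly set \<Rightarrow> 'a bipoly set set" where
  "qmax I = {cls I p | p. const_term p = 0}"

definition socle :: "'a::field bipoly set \<Rightarrow> 'a bipoly set set" where
  "socle I = {s \<in> qcarrier I. \<forall>t\<in>qmax I. qmul I s t = qzero I}"

definition qsubspace :: "'a::field bipoly set \<Rightarrow> 'a bipoly set set \<Rightarrow> bool" where
  "qsubspace I U \<longleftrightarrow> U \<subseteq> qcarrier I \<and> qzero I \<in> U \<and>
     (\<forall>u\<in>U. \<forall>v\<in>U. qadd I u v \<in> U) \<and> (\<forall>c. \<forall>u\<in>U. qsmul I c u \<in> U)"

definition compl_hyperplane :: "'a::field bipoly set \<Rightarrow> 'a bipoly set set \<Rightarrow> bool" where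
  "compl_hyperplane I U \<longleftrightarrow> qsubspace I U \<and> U \<subseteq> qmax I \<and>
     {qadd I u s | u s. u \<in> U \<and> s \<in> socle I} = qmax I \<and>
     U \<inter> socle I = {qzero I}"

definition max_aut :: "'a::field bipoly set \<Rightarrow> ('a bipoly set \<Rightarrow> 'a bipoly set) \<Rightarrow> bool" where
  "max_aut I f \<longleftrightarrow> bij_betw f (qmax I) (qmax I) \<and>
     (\<forall>a\<in>qmax I. \<forall>b\<in>qmax I. f (qadd I a b) = qadd I (f a) (f b)
                              \<and> f (qmul I a b) = qmul I (f a) (f b)) \<and>
     (\<forall>c. \<forall>a\<in>qmax I. f (qsmul I c a) = qsmul I c (f a))"

definition prop_AH :: "'a::field bipoly set \<Rightarrow> bool" where
  "prop_AH I \<longleftrightarrow> (\<forall>U V. compl_hyperplane I U \<and> compl_hyperplane I V \<longrightarrow>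
                      (\<exists>f. max_aut I f \<and> f ` U = V))"

definition An_ideal :: "nat \<Rightarrow> 'a::field bipoly set" where
  "An_ideal n = ideal3 (varY ^ (2*n+3))
                       (varX ^ n * varY ^ 2 - varY ^ (n+2))
                       (varX ^ (2*n+1) - varX * varY ^ (n+1))"

end

theory Submission
  imports Defs
begin

text \<open>
  The functional omega, pairing with the Macaulay dual generator of A_n, detects the ideal: p lies in it
  iff omega(m p) = 0 for every monomial m (reduce p to standard monomials, on which the pairing is
  triangular). Hence e = 1 and e = 1 + y both give complementary hyperplanes {u. omega(e u) = 0}.
  Suppose an automorphism f of the maximal ideal, with f(x) = p and f(y) = q, maps the first onto the
  second. Pushing the defining relations through f and applying omega gives polynomial relations between
  the lowest coefficients of p and q; when n and n - 1 are invertible they force the y^2-coefficient of q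
  to vanish. But then omega((1 + y) q^(2n+1)) = d^(2n+1) with d the y-coefficient of q, which is nonzero,
  although y^(2n+1) lies in the first hyperplane.
\<close>

section \<open>Bivariate monomials and coefficients\<close>

definition bimonom :: "nat \<Rightarrow> nat \<Rightarrow> 'a::comm_ring_1 bipoly" where
  "bimonom i j = monom (monom 1 j) i"

definition bicoeff :: "'a::comm_ring_1 bipoly \<Rightarrow> nat \<Rightarrow> nat \<Rightarrow> 'a" where
  "bicoeff p i j = coeff (coeff p i) j"

lemma bicoeff_add [simp]: "bicoeff (p + q) i j = bicoeff p i j + bicoeff q i j"
  by (simp add: bicoeff_def)

lemma bicoeff_diff [simp]: "bicoeff (p - q) i j = bicoeff p i j - bicoeff q i j"
  by (simp add: bicoeff_def)

lemma bicoeff_0 [simp]: "bicoeff 0 i j = 0"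
  by (simp add: bicoeff_def)

lemma bicoeff_smult [simp]: "bicoeff (smult [:c:] p) i j = c * bicoeff p i j"
  by (simp add: bicoeff_def)

lemma bicoeff_bimonom: "bicoeff (bimonom k l) i j = (if i = k \<and> j = l then 1 else 0)"
  by (simp add: bicoeff_def bimonom_def coeff_monom)

lemma bicoeff_bimonom_mult:
  "bicoeff (bimonom k l * p) i j = (if k \<le> i \<and> l \<le> j then bicoeff p (i - k) (j - l) else 0)"
  by (auto simp add: bicoeff_def bimonom_def coeff_monom_mult)

lemma bicoeff_mult: "bicoeff (p * q) i j = (\<Sum>a\<le>i. \<Sum>b\<le>j. bicoeff p a b * bicoeff q (i - a) (j - b))"
  by (simp add: bicoeff_def coeff_mult coeff_sum)

lemma bicoeff_0_0_mult: "bicoeff (p * q) 0 0 = bicoeff p 0 0 * bicoeff q 0 0"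
  by (simp add: bicoeff_def coeff_mult_0)

lemma bipoly_eqI: "(\<And>i j. bicoeff p i j = bicoeff q i j) \<Longrightarrow> p = q"
  by (intro poly_eqI) (simp add: bicoeff_def poly_eq_iff)

lemma bimonom_mult: "bimonom i j * bimonom k l = bimonom (i + k) (j + l)"
  by (simp add: bimonom_def mult_monom)

lemma bimonom_0_0 [simp]: "bimonom 0 0 = 1"
  by (simp add: bimonom_def)

lemma bimonom_eq_varX_varY: "bimonom i j = varX ^ i * varY ^ j"
proof -
  have y: "varY = monom (monom (1::'a) 1) 0"
    by (simp add: varY_def monom_0 monom_Suc)
  have "varY ^ j = monom (monom (1::'a) j) 0"
    unfolding y monom_power by simp
  then show ?thesis
    by (simp add: varX_def bimonom_def monom_power mult_monom)
qed

lemma varX_eq_bimonom: "varX = bimonom 1 0"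
  and varY_eq_bimonom: "varY = bimonom 0 1"
  by (simp_all add: bimonom_eq_varX_varY)

lemma const_term_eq_bicoeff: "const_term p = bicoeff p 0 0"
  by (simp add: const_term_def bicoeff_def)

lemma bipoly_eq_sum_bimonom:
  "p = (\<Sum>i\<le>degree p. \<Sum>j\<le>degree (coeff p i). smult [:bicoeff p i j:] (bimonom i j))"
proof -
  have "p = (\<Sum>i\<le>degree p. monom (\<Sum>j\<le>degree (coeff p i). monom (coeff (coeff p i) j) j) i)"
    by (subst poly_as_sum_of_monoms [symmetric], simp add: poly_as_sum_of_monoms)
  also have "\<dots> = (\<Sum>i\<le>degree p. \<Sum>j\<le>degree (coeff p i). monom (monom (bicoeff p i j) j) i)"
    by (simp add: monom_sum bicoeff_def)
  finally show ?thesis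
    by (simp add: bimonom_def smult_monom)
qed

section \<open>Vanishing of low-order coefficients\<close>

definition vanishes_below :: "nat \<Rightarrow> 'a::comm_ring_1 poly \<Rightarrow> bool" where
  "vanishes_below k r \<longleftrightarrow> (\<forall>i<k. coeff r i = 0)"

lemma vanishes_below_0 [simp]: "vanishes_below 0 r"
  by (simp add: vanishes_below_def)

lemma vanishes_belowD: "vanishes_below k r \<Longrightarrow> i < k \<Longrightarrow> coeff r i = 0"
  by (simp add: vanishes_below_def)

lemma vanishes_below_smult: "vanishes_below k r \<Longrightarrow> vanishes_below k (smult c r)"
  by (simp add: vanishes_below_def)

lemma vanishes_below_mult:
  assumes "vanishes_below k r" "vanishes_below l s"
  shows "vanishes_below (k + l) (r * s)"
  unfolding vanishes_below_def
proof (intro allI impI)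
  fix m assume "m < k + l"
  then have "coeff r i * coeff s (m - i) = 0" if "i \<le> m" for i
    using assms that by (cases "i < k") (auto simp: vanishes_below_def)
  then show "coeff (r * s) m = 0"
    by (simp add: coeff_mult)
qed

lemma vanishes_below_power: "vanishes_below k r \<Longrightarrow> vanishes_below (m * k) (r ^ m)"
  by (induction m) (simp_all add: vanishes_below_mult)

lemma coeff_mult_vanishes_below:
  assumes "vanishes_below k r" "vanishes_below l s"
  shows "coeff (r * s) (k + l) = coeff r k * coeff s l"
proof -
  have "coeff r i * coeff s (k + l - i) = 0" if "i \<le> k + l" "i \<noteq> k" for i
    using assms that by (cases "i < k") (auto simp: vanishes_below_def)
  then have "(\<Sum>i\<le>k + l. coeff r i * coeff s (k + l - i))
      = (\<Sum>i\<in>{k}. coeff r i * coeff s (k + l - i))"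
    by (intro sum.mono_neutral_right) auto
  then show ?thesis
    by (simp add: coeff_mult)
qed

lemma coeff_mult_vanishes_below_Suc:
  assumes "vanishes_below k r" "vanishes_below l s"
  shows "coeff (r * s) (k + l + 1) = coeff r k * coeff s (l + 1) + coeff r (k + 1) * coeff s l"
proof -
  have "coeff r i * coeff s (k + l + 1 - i) = 0" if "i \<le> k + l + 1" "i \<noteq> k" "i \<noteq> k + 1" for i
    using assms that by (cases "i < k") (auto simp: vanishes_below_def)
  then have "(\<Sum>i\<le>k + l + 1. coeff r i * coeff s (k + l + 1 - i))
      = (\<Sum>i\<in>{k, k + 1}. coeff r i * coeff s (k + l + 1 - i))"
    by (intro sum.mono_neutral_right) auto
  then show ?thesis
    by (simp add: coeff_mult)
qed

lemma coeff_power_vanishes_below: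
  "vanishes_below k r \<Longrightarrow> coeff (r ^ m) (m * k) = coeff r k ^ m"
proof (induction m)
  case (Suc m)
  then show ?case
    using coeff_mult_vanishes_below[OF Suc.prems vanishes_below_power[OF Suc.prems, of m]] by simp
qed simp

lemma coeff_power_vanishes_below_Suc:
  "vanishes_below k r \<Longrightarrow> coeff (r ^ m) (m * k + 1) = of_nat m * coeff r k ^ (m - 1) * coeff r (k + 1)"
proof (induction m)
  case (Suc m)
  have "coeff (r * r ^ m) (k + m * k + 1)
      = coeff r k * coeff (r ^ m) (m * k + 1) + coeff r (k + 1) * coeff (r ^ m) (m * k)"
    using coeff_mult_vanishes_below_Suc[OF Suc.prems vanishes_below_power[OF Suc.prems]] by simp
  also have "\<dots> = coeff r k * (of_nat m * coeff r k ^ (m - 1) * coeff r (k + 1))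
      + coeff r (k + 1) * coeff r k ^ m"
    using Suc by (simp add: coeff_power_vanishes_below)
  also have "\<dots> = of_nat (Suc m) * coeff r k ^ m * coeff r (k + 1)"
    by (cases m) (simp_all add: algebra_simps)
  finally show ?case
    by simp
qed simp

lemma coeff_mult_1:
  fixes r s :: "'a::comm_ring_1 poly"
  shows "coeff (r * s) 1 = coeff r 0 * coeff s 1 + coeff r 1 * coeff s 0"
  using coeff_mult_vanishes_below_Suc[of 0 r 0 s] by simp

lemma coeff_power_1:
  fixes r :: "'a::comm_ring_1 poly"
  shows "coeff (r ^ m) 1 = of_nat m * coeff r 0 ^ (m - 1) * coeff r 1"
  using coeff_power_vanishes_below_Suc[of 0 r m] by simp

definition wvanishes_below :: "nat \<Rightarrow> nat \<Rightarrow> nat \<Rightarrow> 'a::comm_ring_1 bipoly \<Rightarrow> bool" where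
  "wvanishes_below wx wy k p \<longleftrightarrow> (\<forall>i j. wx * i + wy * j < k \<longrightarrow> bicoeff p i j = 0)"

lemma wvanishes_belowD:
  "wvanishes_below wx wy k p \<Longrightarrow> wx * i + wy * j < k \<Longrightarrow> bicoeff p i j = 0"
  by (simp add: wvanishes_below_def)

lemma wvanishes_below_diff:
  "wvanishes_below wx wy k p \<Longrightarrow> wvanishes_below wx wy k q \<Longrightarrow> wvanishes_below wx wy k (p - q)"
  by (simp add: wvanishes_below_def)

lemma wvanishes_below_bimonom: "wvanishes_below wx wy (wx * i + wy * j) (bimonom i j)"
  by (auto simp add: wvanishes_below_def bicoeff_bimonom)

lemma wvanishes_below_mult:
  assumes "wvanishes_below wx wy k p" "wvanishes_below wx wy l q"
  shows "wvanishes_below wx wy (k + l) (p * q)"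
  unfolding wvanishes_below_def
proof (intro allI impI)
  fix i j assume ij: "wx * i + wy * j < k + l"
  have "bicoeff p a b * bicoeff q (i - a) (j - b) = 0" if "a \<le> i" "b \<le> j" for a b
  proof (cases "wx * a + wy * b < k")
    case False
    have "wx * a \<le> wx * i" "wy * b \<le> wy * j"
      using that by auto
    moreover have "wx * (i - a) = wx * i - wx * a" "wy * (j - b) = wy * j - wy * b"
      by (simp_all add: diff_mult_distrib2)
    ultimately have "wx * (i - a) + wy * (j - b) < l"
      using False ij by linarith
    then show ?thesis
      using assms(2) by (simp add: wvanishes_below_def)
  qed (use assms(1) in \<open>simp add: wvanishes_below_def\<close>)
  then show "bicoeff (p * q) i j = 0"
    unfolding bicoeff_mult by (intro sum.neutral ballI) auto
qed

lemma wvanishes_below_power: "wvanishes_below wx wy k p \<Longrightarrow> wvanishes_below wx wy (m * k) (p ^ m)"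
proof (induction m)
  case 0
  then show ?case
    by (simp add: wvanishes_below_def)
next
  case (Suc m)
  then show ?case
    using wvanishes_below_mult[of wx wy k p "m * k" "p ^ m"] by simp
qed

lemma wvanishes_below_1:
  "0 < wx \<Longrightarrow> 0 < wy \<Longrightarrow> bicoeff p 0 0 = 0 \<Longrightarrow> wvanishes_below wx wy 1 p"
  by (simp add: wvanishes_below_def)

lemma wvanishes_below_1_1_2:
  "bicoeff p 0 0 = 0 \<Longrightarrow> bicoeff p 1 0 = 0 \<Longrightarrow> bicoeff p 0 1 = 0 \<Longrightarrow> wvanishes_below 1 1 2 p"
  unfolding wvanishes_below_def
proof (intro allI impI)
  fix i j :: nat assume "bicoeff p 0 0 = 0" "bicoeff p 1 0 = 0" "bicoeff p 0 1 = 0" "1 * i + 1 * j < 2"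
  moreover have "(i = 0 \<and> j = 0) \<or> (i = 1 \<and> j = 0) \<or> (i = 0 \<and> j = 1)"
    using \<open>1 * i + 1 * j < 2\<close> by arith
  ultimately show "bicoeff p i j = 0"
    by auto
qed

lemma wvanishes_below_1_2_2:
  "bicoeff p 0 0 = 0 \<Longrightarrow> bicoeff p 1 0 = 0 \<Longrightarrow> wvanishes_below 1 2 2 p"
  unfolding wvanishes_below_def
proof (intro allI impI)
  fix i j :: nat assume "bicoeff p 0 0 = 0" "bicoeff p 1 0 = 0" "1 * i + 2 * j < 2"
  moreover have "j = 0 \<and> (i = 0 \<or> i = 1)"
    using \<open>1 * i + 2 * j < 2\<close> by arith
  ultimately show "bicoeff p i j = 0"
    by auto
qed

lemma wvanishes_below_3_2_3:
  "bicoeff p 0 0 = 0 \<Longrightarrow> bicoeff p 0 1 = 0 \<Longrightarrow> wvanishes_below 3 2 3 p"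
  unfolding wvanishes_below_def
proof (intro allI impI)
  fix i j :: nat assume "bicoeff p 0 0 = 0" "bicoeff p 0 1 = 0" "3 * i + 2 * j < 3"
  moreover have "i = 0 \<and> (j = 0 \<or> j = 1)"
    using \<open>3 * i + 2 * j < 3\<close> by arith
  ultimately show "bicoeff p i j = 0"
    by auto
qed

lemma wvanishes_below_1_3_3:
  "bicoeff p 0 0 = 0 \<Longrightarrow> bicoeff p 1 0 = 0 \<Longrightarrow> bicoeff p 2 0 = 0 \<Longrightarrow> wvanishes_below 1 3 3 p"
  unfolding wvanishes_below_def
proof (intro allI impI)
  fix i j :: nat assume "bicoeff p 0 0 = 0" "bicoeff p 1 0 = 0" "bicoeff p 2 0 = 0" "1 * i + 3 * j < 3"
  moreover have "j = 0 \<and> (i = 0 \<or> i = 1 \<or> i = 2)"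
    using \<open>1 * i + 3 * j < 3\<close> by arith
  ultimately show "bicoeff p i j = 0"
    by auto
qed

definition ycoeff :: "nat \<Rightarrow> 'a::comm_ring_1 bipoly \<Rightarrow> 'a poly" where
  "ycoeff j p = map_poly (\<lambda>c. coeff c j) p"

lemma coeff_ycoeff: "coeff (ycoeff j p) i = bicoeff p i j"
  by (simp add: ycoeff_def coeff_map_poly bicoeff_def)

lemma ycoeff_0_mult: "ycoeff 0 (p * q) = ycoeff 0 p * ycoeff 0 q"
  by (rule poly_eqI) (simp add: coeff_ycoeff bicoeff_def coeff_mult coeff_sum coeff_mult_0)

lemma ycoeff_1_mult: "ycoeff 1 (p * q) = ycoeff 0 p * ycoeff 1 q + ycoeff 1 p * ycoeff 0 q"
  by (rule poly_eqI) (simp add: coeff_ycoeff bicoeff_def coeff_mult coeff_sum coeff_mult_1 sum.distrib)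

lemma ycoeff_0_power: "ycoeff 0 (p ^ m) = ycoeff 0 p ^ m"
  by (induction m) (simp_all add: ycoeff_0_mult, simp add: ycoeff_def)

lemma ycoeff_1_power: "ycoeff 1 (p ^ m) = smult (of_nat m) (ycoeff 0 p ^ (m - 1) * ycoeff 1 p)"
proof (induction m)
  case 0
  show ?case
    by (simp add: ycoeff_def map_poly_1)
next
  case (Suc m)
  have "ycoeff 1 (p ^ Suc m) = ycoeff 0 p * ycoeff 1 (p ^ m) + ycoeff 1 p * ycoeff 0 p ^ m"
    by (simp only: power_Suc ycoeff_1_mult ycoeff_0_power)
  also have "\<dots> = smult (of_nat (Suc m)) (ycoeff 0 p ^ m * ycoeff 1 p)"
  proof (cases "m = 0")
    case False
    then have "ycoeff 0 p * ycoeff 1 (p ^ m) = smult (of_nat m) (ycoeff 0 p ^ m * ycoeff 1 p)"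
      using Suc.IH by (simp add: mult_smult_right mult.assoc power_eq_if)
    then show ?thesis
      by (simp add: smult_add_left algebra_simps)
  qed (simp add: ycoeff_def map_poly_1)
  finally show ?case
    by simp
qed

lemma vanishes_below_coeff_1: "bicoeff p i 0 = 0 \<Longrightarrow> vanishes_below 1 (coeff p i)"
  by (simp add: vanishes_below_def bicoeff_def)

lemma vanishes_below_coeff_2:
  "bicoeff p i 0 = 0 \<Longrightarrow> bicoeff p i 1 = 0 \<Longrightarrow> vanishes_below 2 (coeff p i)"
  by (auto simp: vanishes_below_def bicoeff_def less_Suc_eq numeral_2_eq_2)

lemma vanishes_below_ycoeff_1: "bicoeff p 0 j = 0 \<Longrightarrow> vanishes_below 1 (ycoeff j p)"
  by (simp add: vanishes_below_def coeff_ycoeff)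

lemma vanishes_below_ycoeff_2:
  "bicoeff p 0 j = 0 \<Longrightarrow> bicoeff p 1 j = 0 \<Longrightarrow> vanishes_below 2 (ycoeff j p)"
  by (auto simp: vanishes_below_def coeff_ycoeff less_Suc_eq numeral_2_eq_2)

section \<open>Ideals and quotient arithmetic\<close>

definition is_ideal :: "'a::comm_ring_1 set \<Rightarrow> bool" where
  "is_ideal I \<longleftrightarrow> 0 \<in> I \<and> (\<forall>p\<in>I. \<forall>q\<in>I. p + q \<in> I) \<and> (\<forall>p\<in>I. \<forall>r. r * p \<in> I)"

lemma ideal_0: "is_ideal I \<Longrightarrow> 0 \<in> I"
  and ideal_add: "is_ideal I \<Longrightarrow> p \<in> I \<Longrightarrow> q \<in> I \<Longrightarrow> p + q \<in> I"
  and ideal_mult_left: "is_ideal I \<Longrightarrow> p \<in> I \<Longrightarrow> r * p \<in> I"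
  by (simp_all add: is_ideal_def)

lemma ideal_mult_right: "is_ideal I \<Longrightarrow> p \<in> I \<Longrightarrow> p * r \<in> I"
  by (metis ideal_mult_left mult.commute)

lemma ideal_uminus: "is_ideal I \<Longrightarrow> p \<in> I \<Longrightarrow> - p \<in> I"
  using ideal_mult_left[of I p "- 1"] by simp

lemma ideal_diff: "is_ideal I \<Longrightarrow> p \<in> I \<Longrightarrow> q \<in> I \<Longrightarrow> p - q \<in> I"
  using ideal_add[of I p "- q"] ideal_uminus[of I q] by simp

lemma ideal_smult: "is_ideal I \<Longrightarrow> p \<in> I \<Longrightarrow> smult [:c:] p \<in> I"
  using ideal_mult_left[of I p "[:[:c:]:]"] by simp

lemma is_ideal_ideal3: "is_ideal (ideal3 a b c)"
  unfolding is_ideal_def ideal3_def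
proof (intro conjI ballI allI)
  show "0 \<in> {u * a + v * b + w * c |u v w. True}"
    by (intro CollectI exI[of _ 0]) simp
next
  fix p q assume "p \<in> {u * a + v * b + w * c |u v w. True}" "q \<in> {u * a + v * b + w * c |u v w. True}"
  then obtain u v w u' v' w' where "p = u * a + v * b + w * c" "q = u' * a + v' * b + w' * c"
    by blast
  then have "p + q = (u + u') * a + (v + v') * b + (w + w') * c"
    by (simp add: algebra_simps)
  then show "p + q \<in> {u * a + v * b + w * c |u v w. True}"
    by blast
next
  fix p r assume "p \<in> {u * a + v * b + w * c |u v w. True}"
  then obtain u v w where "p = u * a + v * b + w * c"
    by blast
  then have "r * p = (r * u) * a + (r * v) * b + (r * w) * c"
    by (simp add: algebra_simps)
  then show "r * p \<in> {u * a + v * b + w * c |u v w. True}"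
    by blast
qed

lemma ideal3_generators: "a \<in> ideal3 a b c" "b \<in> ideal3 a b c" "c \<in> ideal3 a b c"
proof -
  have "a = 1 * a + 0 * b + 0 * c" "b = 0 * a + 1 * b + 0 * c" "c = 0 * a + 0 * b + 1 * c"
    by simp_all
  then show "a \<in> ideal3 a b c" "b \<in> ideal3 a b c" "c \<in> ideal3 a b c"
    unfolding ideal3_def by blast+
qed

lemma ideal3_subset_bicoeff_0_0:
  assumes "bicoeff a 0 0 = 0" "bicoeff b 0 0 = 0" "bicoeff c 0 0 = 0"
  shows "ideal3 a b c \<subseteq> {p. bicoeff p 0 0 = 0}"
  using assms by (auto simp: ideal3_def bicoeff_0_0_mult)

lemma cls_eq_iff:
  assumes "is_ideal I"
  shows "cls I p = cls I q \<longleftrightarrow> p - q \<in> I"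
proof
  assume "cls I p = cls I q"
  moreover have "p \<in> cls I p"
    using ideal_0[OF assms] by (simp add: cls_def)
  ultimately show "p - q \<in> I"
    by (simp add: cls_def)
next
  assume pq: "p - q \<in> I"
  have "r - q \<in> I \<longleftrightarrow> r - p \<in> I" for r
    using ideal_add[OF assms _ pq, of "r - p"] ideal_diff[OF assms _ pq, of "r - q"] by auto
  then show "cls I p = cls I q"
    by (auto simp: cls_def)
qed

lemma cls_eq_qzero_iff: "is_ideal I \<Longrightarrow> cls I p = qzero I \<longleftrightarrow> p \<in> I"
  by (simp add: qzero_def cls_eq_iff)

lemma qadd_cls:
  assumes "is_ideal I"
  shows "qadd I (cls I p) (cls I q) = cls I (p + q)"
proof (auto simp: qadd_def cls_def)
  fix r assume "r - (p + q) \<in> I"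
  then show "\<exists>a. a - p \<in> I \<and> (\<exists>b. b - q \<in> I \<and> r - (a + b) \<in> I)"
    by (intro exI[of _ p] conjI exI[of _ q]) (auto simp: ideal_0[OF assms])
next
  fix r a b assume "a - p \<in> I" "b - q \<in> I" "r - (a + b) \<in> I"
  moreover have "r - (p + q) = (r - (a + b)) + (a - p) + (b - q)"
    by (simp add: algebra_simps)
  ultimately show "r - (p + q) \<in> I"
    by (metis assms ideal_add)
qed

lemma qmul_cls:
  assumes "is_ideal I"
  shows "qmul I (cls I p) (cls I q) = cls I (p * q)"
proof (auto simp: qmul_def cls_def)
  fix r assume "r - p * q \<in> I"
  then show "\<exists>a. a - p \<in> I \<and> (\<exists>b. b - q \<in> I \<and> r - a * b \<in> I)"
    by (intro exI[of _ p] conjI exI[of _ q]) (auto simp: ideal_0[OF assms])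
next
  fix r a b assume "a - p \<in> I" "b - q \<in> I" "r - a * b \<in> I"
  moreover have "r - p * q = (r - a * b) + (a - p) * b + p * (b - q)"
    by (simp add: algebra_simps)
  ultimately show "r - p * q \<in> I"
    by (metis assms ideal_add ideal_mult_left ideal_mult_right)
qed

lemma qsmul_cls:
  assumes "is_ideal I"
  shows "qsmul I c (cls I p) = cls I (smult [:c:] p)"
proof (auto simp: qsmul_def cls_def)
  fix r assume "r - smult [:c:] p \<in> I"
  then show "\<exists>a. a - p \<in> I \<and> r - smult [:c:] a \<in> I"
    by (intro exI[of _ p] conjI) (auto simp: ideal_0[OF assms])
next
  fix r a assume "a - p \<in> I" "r - smult [:c:] a \<in> I"
  moreover have "r - smult [:c:] p = (r - smult [:c:] a) + smult [:c:] (a - p)"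
    by (simp add: algebra_simps smult_diff_right)
  ultimately show "r - smult [:c:] p \<in> I"
    by (metis assms ideal_add ideal_smult)
qed

lemma qmax_iff: "A \<in> qmax I \<longleftrightarrow> (\<exists>p. A = cls I p \<and> bicoeff p 0 0 = 0)"
  by (auto simp: qmax_def const_term_eq_bicoeff)

lemma cls_in_qmax_iff:
  assumes "is_ideal I" "I \<subseteq> {p. bicoeff p 0 0 = 0}"
  shows "cls I p \<in> qmax I \<longleftrightarrow> bicoeff p 0 0 = 0"
proof
  assume "cls I p \<in> qmax I"
  then obtain q where "cls I p = cls I q" "bicoeff q 0 0 = 0"
    by (auto simp: qmax_iff)
  with assms show "bicoeff p 0 0 = 0"
    by (metis (mono_tags) bicoeff_diff cls_eq_iff eq_iff_diff_eq_0 mem_Collect_eq subsetD)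
qed (auto simp: qmax_iff)

section \<open>The defining ideal of A_n and its dual functional\<close>

lemma An_ideal_eq_ideal3:
  "An_ideal n = ideal3 (bimonom 0 (2*n+3)) (bimonom n 2 - bimonom 0 (n+2))
                       (bimonom (2*n+1) 0 - bimonom 1 (n+1))"
  by (simp add: An_ideal_def bimonom_eq_varX_varY)

lemma is_ideal_An_ideal [simp]: "is_ideal (An_ideal n)"
  by (simp add: An_ideal_eq_ideal3 is_ideal_ideal3)

lemma An_ideal_generators:
  "bimonom 0 (2*n+3) \<in> An_ideal n"
  "bimonom n 2 - bimonom 0 (n+2) \<in> An_ideal n"
  "bimonom (2*n+1) 0 - bimonom 1 (n+1) \<in> An_ideal n"
  unfolding An_ideal_eq_ideal3 by (rule ideal3_generators)+

lemma An_ideal_subset_bicoeff_0_0: "An_ideal n \<subseteq> {p. bicoeff p 0 0 = 0}"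
  unfolding An_ideal_eq_ideal3 by (rule ideal3_subset_bicoeff_0_0) (simp_all add: bicoeff_bimonom)

lemma cls_An_ideal_in_qmax_iff: "cls (An_ideal n) p \<in> qmax (An_ideal n) \<longleftrightarrow> bicoeff p 0 0 = 0"
  by (intro cls_in_qmax_iff is_ideal_An_ideal An_ideal_subset_bicoeff_0_0)

text \<open>Pairing with the Macaulay dual generator y^(2n+2) + x^n y^(n+2) + x^(2n) y^2 + x^(3n) y of A_n.\<close>

definition omega :: "nat \<Rightarrow> 'a::comm_ring_1 bipoly \<Rightarrow> 'a" where
  "omega n p = bicoeff p 0 (2*n+2) + bicoeff p n (n+2) + bicoeff p (2*n) 2 + bicoeff p (3*n) 1"

lemma omega_add: "omega n (p + q) = omega n p + omega n q"
  and omega_diff: "omega n (p - q) = omega n p - omega n q"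
  and omega_smult: "omega n (smult [:c:] p) = c * omega n p"
  by (simp_all add: omega_def algebra_simps)

lemma omega_bimonom_mult: "omega n (bimonom k l * p) =
   (if k = 0 \<and> l \<le> 2*n+2 then bicoeff p 0 (2*n+2-l) else 0) +
   (if k \<le> n \<and> l \<le> n+2 then bicoeff p (n-k) (n+2-l) else 0) +
   (if k \<le> 2*n \<and> l \<le> 2 then bicoeff p (2*n-k) (2-l) else 0) +
   (if k \<le> 3*n \<and> l \<le> 1 then bicoeff p (3*n-k) (1-l) else 0)"
  by (simp add: omega_def bicoeff_bimonom_mult)

lemma omega_An_ideal:
  assumes "2 \<le> n" "p \<in> An_ideal n"
  shows "omega n p = 0"
proof -
  have "omega n (r * bimonom k l) = omega n (bimonom k l * r)" for r :: "'a bipoly" and k l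
    by (simp add: mult.commute)
  then have gens: "omega n (r * bimonom 0 (2*n+3)) = 0"
    "omega n (r * (bimonom n 2 - bimonom 0 (n+2))) = 0"
    "omega n (r * (bimonom (2*n+1) 0 - bimonom 1 (n+1))) = 0" for r :: "'a bipoly"
    using assms(1) by (simp_all add: right_diff_distrib omega_diff omega_bimonom_mult)
  from assms(2) obtain a b c where "p = a * bimonom 0 (2*n+3) + b * (bimonom n 2 - bimonom 0 (n+2))
      + c * (bimonom (2*n+1) 0 - bimonom 1 (n+1))"
    by (auto simp: An_ideal_eq_ideal3 ideal3_def)
  then show ?thesis
    by (simp only: omega_add gens) simp
qed

lemma omega_An_ideal_mult: "2 \<le> n \<Longrightarrow> p \<in> An_ideal n \<Longrightarrow> omega n (r * p) = 0"
  by (simp add: omega_An_ideal ideal_mult_left)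

section \<open>Reduction to standard monomials\<close>

definition std_monomial_exp :: "nat \<Rightarrow> nat \<Rightarrow> nat \<Rightarrow> bool" where
  "std_monomial_exp n i j \<longleftrightarrow>
     (i = 0 \<and> j \<le> 2*n+2) \<or> (1 \<le> i \<and> i \<le> n-1 \<and> j \<le> n+2) \<or> (n \<le> i \<and> i \<le> 2*n \<and> j \<le> 1)"

definition std_supported :: "nat \<Rightarrow> 'a::comm_ring_1 bipoly \<Rightarrow> bool" where
  "std_supported n b \<longleftrightarrow> (\<forall>i j. \<not> std_monomial_exp n i j \<longrightarrow> bicoeff b i j = 0)"

definition has_std_form :: "nat \<Rightarrow> 'a::field bipoly \<Rightarrow> bool" where
  "has_std_form n p \<longleftrightarrow> (\<exists>b. std_supported n b \<and> p - b \<in> An_ideal n)"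

lemma has_std_form_if_in_An_ideal: "p \<in> An_ideal n \<Longrightarrow> has_std_form n p"
  unfolding has_std_form_def std_supported_def by (intro exI[of _ 0]) simp

lemma has_std_form_std_monomial: "std_monomial_exp n i j \<Longrightarrow> has_std_form n (bimonom i j)"
  unfolding has_std_form_def std_supported_def
  by (intro exI[of _ "bimonom i j"]) (auto simp: bicoeff_bimonom ideal_0)

lemma has_std_form_cong:
  assumes "p - q \<in> An_ideal n" "has_std_form n q"
  shows "has_std_form n p"
proof -
  obtain b where "std_supported n b" "q - b \<in> An_ideal n"
    using assms(2) by (auto simp: has_std_form_def)
  moreover have "p - b = (p - q) + (q - b)"
    by simp
  ultimately show ?thesis
    using assms(1) unfolding has_std_form_def by (metis ideal_add is_ideal_An_ideal)
qed

lemma has_std_form_add: "has_std_form n p \<Longrightarrow> has_std_form n q \<Longrightarrow> has_std_form n (p + q)"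
proof -
  assume "has_std_form n p" "has_std_form n q"
  then obtain b c where "std_supported n b" "p - b \<in> An_ideal n" "std_supported n c" "q - c \<in> An_ideal n"
    by (auto simp: has_std_form_def)
  moreover have "(p + q) - (b + c) = (p - b) + (q - c)"
    by simp
  ultimately show ?thesis
    unfolding has_std_form_def std_supported_def
    by (intro exI[of _ "b + c"]) (metis ideal_add is_ideal_An_ideal bicoeff_add add.right_neutral)
qed

lemma has_std_form_smult: "has_std_form n p \<Longrightarrow> has_std_form n (smult [:c:] p)"
proof -
  assume "has_std_form n p"
  then obtain b where "std_supported n b" "p - b \<in> An_ideal n"
    by (auto simp: has_std_form_def)
  moreover have "smult [:c:] p - smult [:c:] b = smult [:c:] (p - b)"
    by (simp add: smult_diff_right)
  ultimately show ?thesis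
    unfolding has_std_form_def std_supported_def
    by (intro exI[of _ "smult [:c:] b"]) (metis ideal_smult is_ideal_An_ideal bicoeff_smult mult_zero_right)
qed

lemma has_std_form_sum:
  "finite A \<Longrightarrow> (\<And>a. a \<in> A \<Longrightarrow> has_std_form n (g a)) \<Longrightarrow> has_std_form n (sum g A)"
  by (induction A rule: finite_induct) (auto intro: has_std_form_add has_std_form_if_in_An_ideal simp: ideal_0)

text \<open>Ideal membership certificate for x y^(n+3), where n = m + 2, P = x^m and Q = y^m.\<close>

lemma x_y5_certificate:
  fixes X Y P Q :: "'b::comm_ring_1"
  shows "X * (Q * Y^5) = ((P * X^3 + X * (Q * Y^2)) * (1 + Q * Y)) * (P * X^2 * Y^2 - Q * Y^4)
     + (- (Y^2 * (1 + Q * Y))) * (P^2 * X^5 - X * (Q * Y^3)) + (X * Q) * (Q^2 * Y^7)"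
  by (simp add: algebra_simps power2_eq_square power3_eq_cube numeral_eq_Suc)

context
  fixes n :: nat
  assumes n2: "2 \<le> n"
begin

lemma bimonom_1_n3_in_An_ideal: "(bimonom 1 (n+3) :: 'a::field bipoly) \<in> An_ideal n"
proof -
  obtain m where m: "n = m + 2"
    using n2 by (metis add.commute le_Suc_ex)
  let ?X = "varX :: 'a bipoly" and ?Y = "varY :: 'a bipoly"
  let ?g1 = "bimonom 0 (2*n+3) :: 'a bipoly"
    and ?g2 = "bimonom n 2 - bimonom 0 (n+2) :: 'a bipoly"
    and ?g3 = "bimonom (2*n+1) 0 - bimonom 1 (n+1) :: 'a bipoly"
  have pow: "z ^ (n+1) = z^m * z^3" "z ^ (2*n+1) = (z^m)^2 * z^5" "z ^ (2*n+3) = (z^m)^2 * z^7"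
    for z :: "'a bipoly"
  proof -
    have "n+1 = m+3" "2*n+1 = m+m+5" "2*n+3 = m+m+7"
      using m by simp_all
    then show "z ^ (n+1) = z^m * z^3" "z ^ (2*n+1) = (z^m)^2 * z^5" "z ^ (2*n+3) = (z^m)^2 * z^7"
      by (simp_all only: power_add power2_eq_square)
  qed
  have "bimonom 1 (n+3) = ?X * (?Y^m * ?Y^5)"
    by (simp add: bimonom_eq_varX_varY m power_add)
  moreover have "?g2 = ?X^m * ?X^2 * ?Y^2 - ?Y^m * ?Y^4"
    by (simp add: bimonom_eq_varX_varY m power_add algebra_simps numeral_eq_Suc)
  moreover have "?g3 = (?X^m)^2 * ?X^5 - ?X * (?Y^m * ?Y^3)"
    by (simp only: bimonom_eq_varX_varY pow power_0 power_one_right mult_1_right)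
  moreover have "?g1 = (?Y^m)^2 * ?Y^7"
    by (simp add: bimonom_eq_varX_varY pow)
  ultimately have "bimonom 1 (n+3) = ((?X^m * ?X^3 + ?X * (?Y^m * ?Y^2)) * (1 + ?Y^m * ?Y)) * ?g2
      + (- (?Y^2 * (1 + ?Y^m * ?Y))) * ?g3 + (?X * ?Y^m) * ?g1"
    by (simp only: x_y5_certificate)
  then show ?thesis
    using An_ideal_generators[of n] by (metis ideal_add ideal_mult_left is_ideal_An_ideal)
qed

lemma bimonom_in_An_ideal_if_high_y:
  assumes "2*n+3 \<le> j"
  shows "(bimonom i j :: 'a::field bipoly) \<in> An_ideal n"
proof -
  have "bimonom i j = bimonom i (j - (2*n+3)) * (bimonom 0 (2*n+3) :: 'a bipoly)"
    using assms by (simp add: bimonom_mult)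
  then show ?thesis
    using An_ideal_generators(1) ideal_mult_left is_ideal_An_ideal by metis
qed

lemma bimonom_in_An_ideal_if_mixed:
  assumes "1 \<le> i" "n+3 \<le> j"
  shows "(bimonom i j :: 'a::field bipoly) \<in> An_ideal n"
proof -
  have "bimonom i j = bimonom (i - 1) (j - (n+3)) * (bimonom 1 (n+3) :: 'a bipoly)"
    using assms by (simp add: bimonom_mult)
  then show ?thesis
    using bimonom_1_n3_in_An_ideal ideal_mult_left is_ideal_An_ideal by metis
qed

lemma bimonom_reduce_x_n:
  assumes "n \<le> i" "2 \<le> j"
  shows "(bimonom i j - bimonom (i-n) (j+n) :: 'a::field bipoly) \<in> An_ideal n"
proof -
  obtain a b where "i = a + n" "j = b + 2"
    using assms by (metis le_add_diff_inverse2)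
  then have "bimonom i j - bimonom (i-n) (j+n) = bimonom a b * (bimonom n 2 - bimonom 0 (n+2) :: 'a bipoly)"
    by (simp add: right_diff_distrib bimonom_mult algebra_simps)
  then show ?thesis
    by (metis An_ideal_generators(2) ideal_mult_left is_ideal_An_ideal)
qed

lemma bimonom_reduce_x_2n1:
  assumes "2*n+1 \<le> i"
  shows "(bimonom i j - bimonom (i-2*n) (j+n+1) :: 'a::field bipoly) \<in> An_ideal n"
proof -
  obtain a where "i = a + (2*n+1)"
    using assms by (metis le_add_diff_inverse2)
  then have "bimonom i j - bimonom (i-2*n) (j+n+1)
      = bimonom a j * (bimonom (2*n+1) 0 - bimonom 1 (n+1) :: 'a bipoly)"
    by (simp add: right_diff_distrib bimonom_mult algebra_simps)
  then show ?thesis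
    by (metis An_ideal_generators(3) ideal_mult_left is_ideal_An_ideal)
qed

lemma has_std_form_bimonom: "has_std_form n (bimonom i j :: 'a::field bipoly)"
proof (induction i arbitrary: j rule: less_induct)
  case (less i)
  consider "std_monomial_exp n i j" | "2*n+3 \<le> j" | "2*n+1 \<le> i" | "n \<le> i" "2 \<le> j"
    | "1 \<le> i" "n+3 \<le> j"
    unfolding std_monomial_exp_def by linarith
  then show ?case
  proof cases
    case 1
    then show ?thesis
      by (rule has_std_form_std_monomial)
  next
    case 2
    then show ?thesis
      by (intro has_std_form_if_in_An_ideal bimonom_in_An_ideal_if_high_y)
  next
    case 3
    then show ?thesis
      using n2 by (intro has_std_form_cong[OF bimonom_reduce_x_2n1 less]) auto
  next
    case 4
    then show ?thesis
      using n2 by (intro has_std_form_cong[OF bimonom_reduce_x_n less]) auto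
  next
    case 5
    then show ?thesis
      by (intro has_std_form_if_in_An_ideal bimonom_in_An_ideal_if_mixed)
  qed
qed

lemma has_std_form: "has_std_form n (p :: 'a::field bipoly)"
  by (subst bipoly_eq_sum_bimonom)
    (intro has_std_form_sum has_std_form_smult has_std_form_bimonom finite_atMost)

end

section \<open>Nondegeneracy of omega on standard monomials\<close>

context
  fixes n :: nat and b :: "'a::comm_ring_1 bipoly"
  assumes n2: "2 \<le> n"
    and std: "std_supported n b"
    and orth: "\<And>k l. omega n (bimonom k l * b) = 0"
begin

lemma nonstd_bicoeff_eq_0: "\<not> std_monomial_exp n i j \<Longrightarrow> bicoeff b i j = 0"
  using std by (simp add: std_supported_def)

lemma orthogonal_expanded:
  "(if k = 0 \<and> l \<le> 2*n+2 then bicoeff b 0 (2*n+2-l) else 0) +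
   (if k \<le> n \<and> l \<le> n+2 then bicoeff b (n-k) (n+2-l) else 0) +
   (if k \<le> 2*n \<and> l \<le> 2 then bicoeff b (2*n-k) (2-l) else 0) +
   (if k \<le> 3*n \<and> l \<le> 1 then bicoeff b (3*n-k) (1-l) else 0) = 0"
  using orth[of k l] by (simp add: omega_bimonom_mult)

lemma orthogonal_bicoeff_low_x:
  shows "i \<le> n-1 \<Longrightarrow> j \<le> 1 \<Longrightarrow> bicoeff b i j = 0"
    and "n \<le> i \<Longrightarrow> i \<le> 2*n-1 \<Longrightarrow> bicoeff b i 0 = 0"
proof -
  show low: "bicoeff b i j = 0" if "i \<le> n-1" "j \<le> 1" for i j
  proof -
    have "3*n - i \<noteq> 0" "\<not> 3*n - i \<le> 2*n" "3*n - (3*n-i) = i" "1 - (1-j) = j" "1 - j \<le> 1"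
      using that n2 by auto
    then show ?thesis
      using orthogonal_expanded[of "3*n-i" "1-j"] by simp
  qed
  show "bicoeff b i 0 = 0" if "n \<le> i" "i \<le> 2*n-1"
  proof -
    have "3*n-i \<noteq> 0" "\<not> 3*n-i \<le> n" "3*n-i \<le> 2*n" "2*n - (3*n-i) = i - n" "3*n-(3*n-i) = i"
      using that n2 by auto
    moreover have "bicoeff b (i-n) 1 = 0"
      using low that by auto
    ultimately show ?thesis
      using orthogonal_expanded[of "3*n-i" 1] by simp
  qed
qed

lemma orthogonal_bicoeff_low_block: "i \<le> n-1 \<Longrightarrow> j \<le> n \<Longrightarrow> bicoeff b i j = 0"
proof -
  assume ij: "i \<le> n-1" "j \<le> n"
  consider "i = 0" "j \<le> n-1" | "i \<noteq> 0" "j \<le> n-1" | "i = 0" "j = n" | "i \<noteq> 0" "j = n"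
    using ij by linarith
  then show ?thesis
  proof cases
    case 1
    have "2*n+2-(2*n+2-j) = j" "\<not> 2*n+2-j \<le> n+2" "\<not> 2*n+2-j \<le> 2"
      using 1 n2 by auto
    then show ?thesis
      using orthogonal_expanded[of 0 "2*n+2-j"] 1 by simp
  next
    case 2
    have "n - i \<noteq> 0" "n-(n-i) = i" "n+2-(n+2-j) = j" "\<not> n+2-j \<le> 2"
      using 2 ij n2 by auto
    then show ?thesis
      using orthogonal_expanded[of "n-i" "n+2-j"] by simp
  next
    case 3
    have "2*n+2-(n+2) = n" "\<not> n+2 \<le> 2"
      using n2 by auto
    moreover have "bicoeff b n 0 = 0"
      using orthogonal_bicoeff_low_x(2) n2 by auto
    ultimately show ?thesis
      using orthogonal_expanded[of 0 "n+2"] 3 by simp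
  next
    case 4
    have "n - i \<noteq> 0" "n-(n-i) = i" "n-i \<le> 2*n" "2*n-(n-i) = n+i"
      using 4 ij n2 by auto
    moreover have "bicoeff b (n+i) 0 = 0"
      using orthogonal_bicoeff_low_x(2) ij 4 n2 by auto
    ultimately show ?thesis
      using orthogonal_expanded[of "n-i" 2] 4 by simp
  qed
qed

lemma orthogonal_bicoeff_middle:
  shows "i \<le> n-1 \<Longrightarrow> bicoeff b (n+i) 1 = 0"
    and "i \<le> n-1 \<Longrightarrow> bicoeff b i (n+1) = 0"
    and "1 \<le> i \<Longrightarrow> i \<le> n-1 \<Longrightarrow> bicoeff b i (n+2) = 0"
proof -
  show x1: "bicoeff b (n+i) 1 = 0" if "i \<le> n-1" for i
  proof -
    have "2*n-i \<noteq> 0" "\<not> 2*n-i \<le> n" "2*n-(2*n-i) = i" "2*n-i \<le> 3*n" "3*n-(2*n-i) = n+i"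
      using that n2 by auto
    moreover have "bicoeff b i 2 = 0"
      using orthogonal_bicoeff_low_block that n2 by auto
    ultimately show ?thesis
      using orthogonal_expanded[of "2*n-i" 0] by simp
  qed
  show "bicoeff b i (n+1) = 0" if "i \<le> n-1"
  proof (cases "i = 0")
    case True
    have "2*n+2-(n+1) = n+1" "n+2-(n+1) = 1" "\<not> n+1 \<le> 2"
      using n2 by auto
    then show ?thesis
      using orthogonal_expanded[of 0 "n+1"] x1[of 0] True by simp
  next
    case False
    have "n - i \<noteq> 0" "n-(n-i) = i" "n-i \<le> 2*n" "2*n-(n-i) = n+i" "n-i \<le> 3*n" "3*n-(n-i) = 2*n+i"
      using that n2 False by auto
    moreover have "bicoeff b (2*n+i) 0 = 0"
      using False that n2 by (intro nonstd_bicoeff_eq_0) (simp add: std_monomial_exp_def)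
    ultimately show ?thesis
      using orthogonal_expanded[of "n-i" 1] x1 that by simp
  qed
  show "bicoeff b i (n+2) = 0" if "1 \<le> i" "i \<le> n-1"
  proof -
    have "n - i \<noteq> 0" "n-(n-i) = i" "n-i \<le> 2*n" "2*n-(n-i) = n+i" "n-i \<le> 3*n" "3*n-(n-i) = 2*n+i"
      using that n2 by auto
    moreover have "bicoeff b (n+i) 2 = 0" "bicoeff b (2*n+i) 1 = 0"
      using that n2 by (auto intro!: nonstd_bicoeff_eq_0 simp: std_monomial_exp_def)
    ultimately show ?thesis
      using orthogonal_expanded[of "n-i" 0] by simp
  qed
qed

lemma orthogonal_bicoeff_x_2n_0: "bicoeff b (2*n) 0 = 0"
proof -
  have "n \<noteq> 0" "n+2-1 = n+1" "2*n - n = n" "3*n-n = 2*n"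
    using n2 by auto
  then show ?thesis
    using orthogonal_expanded[of n 1] orthogonal_bicoeff_middle(1,2)[of 0] by simp
qed

lemma orthogonal_bicoeff_y_axis: "n+2 \<le> j \<Longrightarrow> j \<le> 2*n \<Longrightarrow> bicoeff b 0 j = 0"
proof -
  assume j: "n+2 \<le> j" "j \<le> 2*n"
  show ?thesis
  proof (cases "j = 2*n")
    case True
    have "2*n+2-2 = 2*n" "n+2-2 = n"
      by simp_all
    moreover have "bicoeff b n n = 0"
      using n2 by (intro nonstd_bicoeff_eq_0) (simp add: std_monomial_exp_def)
    ultimately show ?thesis
      using orthogonal_expanded[of 0 2] orthogonal_bicoeff_x_2n_0 True by simp
  next
    case False
    have "2*n+2-(2*n+2-j) = j" "2*n+2-j \<le> n+2" "n+2-(2*n+2-j) = j-n" "\<not> 2*n+2-j \<le> 2"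
      using j False n2 by auto
    moreover have "bicoeff b n (j-n) = 0"
      using j False n2 by (intro nonstd_bicoeff_eq_0) (simp add: std_monomial_exp_def, arith)
    ultimately show ?thesis
      using orthogonal_expanded[of 0 "2*n+2-j"] by simp
  qed
qed

lemma orthogonal_bicoeff_x_2n_1: "bicoeff b (2*n) 1 = 0"
proof -
  have "n \<noteq> 0" "2*n - n = n" "3*n-n = 2*n"
    using n2 by auto
  moreover have "bicoeff b n 2 = 0"
    using n2 by (intro nonstd_bicoeff_eq_0) (simp add: std_monomial_exp_def)
  moreover have "bicoeff b 0 (n+2) = 0"
    using n2 by (intro orthogonal_bicoeff_y_axis) simp_all
  ultimately show ?thesis
    using orthogonal_expanded[of n 0] by simp
qed

lemma orthogonal_bicoeff_y_axis_top: "bicoeff b 0 (2*n+1) = 0" "bicoeff b 0 (2*n+2) = 0"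
proof -
  have "2*n+2-1 = 2*n+1" "n+2-1 = n+1"
    by simp_all
  moreover have "bicoeff b n (n+1) = 0" "bicoeff b (3*n) 0 = 0"
    using n2 by (auto intro!: nonstd_bicoeff_eq_0 simp: std_monomial_exp_def)
  ultimately show "bicoeff b 0 (2*n+1) = 0"
    using orthogonal_expanded[of 0 1] orthogonal_bicoeff_x_2n_1 by simp
  have "bicoeff b n (n+2) = 0" "bicoeff b (2*n) 2 = 0" "bicoeff b (3*n) 1 = 0"
    using n2 by (auto intro!: nonstd_bicoeff_eq_0 simp: std_monomial_exp_def)
  then show "bicoeff b 0 (2*n+2) = 0"
    using orthogonal_expanded[of 0 0] by simp
qed

lemma orthogonal_std_bicoeff_eq_0:
  assumes "std_monomial_exp n i j"
  shows "bicoeff b i j = 0"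
proof (cases "i \<le> n - 1")
  case True
  consider "j \<le> n" | "j = n+1" | "i = 0" "n+2 \<le> j" | "1 \<le> i" "j = n+2"
    using assms True unfolding std_monomial_exp_def
    by (cases "i = 0"; cases "j \<le> n"; cases "j = n+1"; auto)
  then show ?thesis
  proof cases
    case 3
    then have "j \<le> 2*n \<or> j = 2*n+1 \<or> j = 2*n+2"
      using assms by (auto simp: std_monomial_exp_def)
    then show ?thesis
      using 3 orthogonal_bicoeff_y_axis orthogonal_bicoeff_y_axis_top by auto
  qed (use True orthogonal_bicoeff_low_block orthogonal_bicoeff_middle(2,3) in auto)
next
  case False
  consider "i \<le> 2*n-1" "j = 0" | "i \<le> 2*n-1" "j = 1" | "i = 2*n" "j \<le> 1"
    using assms False unfolding std_monomial_exp_def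
    by (cases "i = 2*n"; cases "j = 0"; auto simp: le_Suc_eq)
  moreover have "n \<le> i"
    using False by simp
  ultimately show ?thesis
    using orthogonal_bicoeff_low_x(2) orthogonal_bicoeff_middle(1)[of "i-n"]
      orthogonal_bicoeff_x_2n_0 orthogonal_bicoeff_x_2n_1
    by cases (auto simp: le_Suc_eq)
qed

lemma orthogonal_std_supported_eq_0: "b = 0"
  using orthogonal_std_bicoeff_eq_0 nonstd_bicoeff_eq_0 by (metis bicoeff_0 bipoly_eqI)

end

lemma in_An_ideal_iff_omega:
  assumes "2 \<le> n"
  shows "p \<in> An_ideal n \<longleftrightarrow> (\<forall>k l. omega n (bimonom k l * p) = 0)"
proof
  assume orth: "\<forall>k l. omega n (bimonom k l * p) = 0"
  obtain b where b: "std_supported n b" "p - b \<in> An_ideal n"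
    using has_std_form[OF assms] by (auto simp: has_std_form_def)
  have "omega n (bimonom k l * b) = 0" for k l
  proof -
    have "bimonom k l * b = bimonom k l * p - bimonom k l * (p - b)"
      by (simp add: algebra_simps)
    then show ?thesis
      using orth omega_An_ideal_mult[OF assms b(2)] by (simp add: omega_diff)
  qed
  then have "b = 0"
    by (rule orthogonal_std_supported_eq_0[OF assms b(1)])
  then show "p \<in> An_ideal n"
    using b(2) by simp
qed (simp add: omega_An_ideal_mult[OF assms])

section \<open>The socle and the hyperplanes cut out by omega\<close>

context
  fixes n :: nat
  assumes n2: "2 \<le> n"
begin

lemma omega_socle: "omega n (bimonom 0 (2*n+2)) = 1"
  using n2 by (simp add: omega_def bicoeff_bimonom)

lemma omega_y_socle: "omega n (varY * bimonom 0 (2*n+2)) = 0"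
  using n2 by (simp add: omega_def bicoeff_bimonom varY_eq_bimonom bimonom_mult)

lemma socle_mult_in_An_ideal:
  assumes "bicoeff q 0 0 = 0"
  shows "(bimonom 0 (2*n+2) * q :: 'a::field bipoly) \<in> An_ideal n"
proof -
  have "omega n (bimonom k l * (bimonom 0 (2*n+2) * q)) = 0" for k l
    using assms by (simp add: mult.assoc[symmetric] bimonom_mult omega_bimonom_mult)
  then show ?thesis
    by (simp add: in_An_ideal_iff_omega[OF n2])
qed

lemma annihilated_imp_socle_multiple:
  assumes x: "p * varX \<in> An_ideal n" and y: "p * varY \<in> An_ideal n"
  shows "p - smult [:omega n p:] (bimonom 0 (2*n+2)) \<in> (An_ideal n :: 'a::field bipoly set)"
  unfolding in_An_ideal_iff_omega[OF n2]
proof (intro allI)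
  fix k l
  show "omega n (bimonom k l * (p - smult [:omega n p:] (bimonom 0 (2*n+2)))) = 0"
  proof (cases "k = 0 \<and> l = 0")
    case True
    then have "bimonom k l = (1 :: 'a bipoly)"
      by simp
    then show ?thesis
      by (simp only: mult_1 omega_diff omega_smult omega_socle) simp
  next
    case False
    have "bimonom k l * p \<in> An_ideal n"
    proof (cases "k = 0")
      case True
      then have "bimonom k l * p = bimonom k (l-1) * (p * varY)"
        using False by (simp add: varY_eq_bimonom mult.assoc[symmetric] mult.commute[of _ p] bimonom_mult)
      then show ?thesis
        using y ideal_mult_left is_ideal_An_ideal by metis
    next
      case False
      then have "bimonom k l * p = bimonom (k-1) l * (p * varX)"
        by (simp add: varX_eq_bimonom mult.assoc[symmetric] mult.commute[of _ p] bimonom_mult)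
      then show ?thesis
        using x ideal_mult_left is_ideal_An_ideal by metis
    qed
    moreover have "bimonom k l * smult [:omega n p:] (bimonom 0 (2*n+2)) \<in> An_ideal n"
    proof -
      have "bimonom 0 (2*n+2) * bimonom k l \<in> An_ideal n"
        using False by (intro socle_mult_in_An_ideal) (simp add: bicoeff_bimonom)
      then show ?thesis
        by (metis ideal_smult is_ideal_An_ideal mult.commute mult_smult_left)
    qed
    ultimately show ?thesis
      by (simp add: right_diff_distrib omega_diff omega_An_ideal[OF n2])
  qed
qed

lemma socle_An_ideal_iff:
  "A \<in> socle (An_ideal n :: 'a::field bipoly set) \<longleftrightarrow>
     (\<exists>c. A = cls (An_ideal n) (smult [:c:] (bimonom 0 (2*n+2))))"
proof
  assume "\<exists>c. A = cls (An_ideal n) (smult [:c:] (bimonom 0 (2*n+2)))"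
  then obtain c where A: "A = cls (An_ideal n) (smult [:c:] (bimonom 0 (2*n+2)))"
    by blast
  have "qmul (An_ideal n) A t = qzero (An_ideal n)" if t_max: "t \<in> qmax (An_ideal n)" for t
  proof -
    obtain q where t: "t = cls (An_ideal n) q" "bicoeff q 0 0 = 0"
      using t_max by (auto simp: qmax_iff)
    have "smult [:c:] (bimonom 0 (2*n+2)) * q = smult [:c:] (bimonom 0 (2*n+2) * q :: 'a bipoly)"
      by simp
    then show ?thesis
      using A t socle_mult_in_An_ideal[OF t(2)] by (simp add: qmul_cls cls_eq_qzero_iff ideal_smult)
  qed
  then show "A \<in> socle (An_ideal n)"
    using A by (simp add: socle_def qcarrier_def)
next
  assume A: "A \<in> socle (An_ideal n)"
  then obtain p where p: "A = cls (An_ideal n) p"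
    by (auto simp: socle_def qcarrier_def)
  have "qmul (An_ideal n) A (cls (An_ideal n) v) = qzero (An_ideal n)" if "v = varX \<or> v = varY" for v
    using A that by (auto simp: socle_def cls_An_ideal_in_qmax_iff varX_eq_bimonom varY_eq_bimonom bicoeff_bimonom)
  then have "p * varX \<in> An_ideal n" "p * varY \<in> An_ideal n"
    using p by (simp_all add: qmul_cls cls_eq_qzero_iff)
  then show "\<exists>c. A = cls (An_ideal n) (smult [:c:] (bimonom 0 (2*n+2)))"
    using p annihilated_imp_socle_multiple by (auto simp: cls_eq_iff)
qed

end

definition omega_hyperplane :: "nat \<Rightarrow> 'a::field bipoly \<Rightarrow> 'a bipoly set set" where
  "omega_hyperplane n e = {cls (An_ideal n) p | p. bicoeff p 0 0 = 0 \<and> omega n (e * p) = 0}"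

context
  fixes n :: nat
  assumes n2: "2 \<le> n"
begin

lemma cls_in_omega_hyperplane_iff:
  fixes p e :: "'a::field bipoly"
  shows "cls (An_ideal n) p \<in> omega_hyperplane n e \<longleftrightarrow> bicoeff p 0 0 = 0 \<and> omega n (e * p) = 0"
proof
  assume "cls (An_ideal n) p \<in> omega_hyperplane n e"
  then obtain q where q: "cls (An_ideal n) p = cls (An_ideal n) q" "bicoeff q 0 0 = 0" "omega n (e * q) = 0"
    by (auto simp: omega_hyperplane_def)
  then have pq: "p - q \<in> An_ideal n"
    by (simp add: cls_eq_iff)
  have "omega n (e * p) = omega n (e * (p - q)) + omega n (e * q)"
    by (simp add: right_diff_distrib omega_diff)
  then show "bicoeff p 0 0 = 0 \<and> omega n (e * p) = 0"
    using q subsetD[OF An_ideal_subset_bicoeff_0_0 pq] omega_An_ideal_mult[OF n2 pq] by simp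
qed (auto simp: omega_hyperplane_def)

lemma qsubspace_omega_hyperplane:
  fixes e :: "'a::field bipoly"
  shows "qsubspace (An_ideal n) (omega_hyperplane n e)"
  unfolding qsubspace_def
proof (intro conjI ballI allI)
  show "omega_hyperplane n e \<subseteq> qcarrier (An_ideal n)"
    by (auto simp: omega_hyperplane_def qcarrier_def)
  show "qzero (An_ideal n) \<in> omega_hyperplane n e"
    by (simp add: qzero_def cls_in_omega_hyperplane_iff omega_def)
next
  fix u v assume "u \<in> omega_hyperplane n e" "v \<in> omega_hyperplane n e"
  then show "qadd (An_ideal n) u v \<in> omega_hyperplane n e"
    by (auto simp: omega_hyperplane_def qadd_cls cls_in_omega_hyperplane_iff distrib_left omega_add)
next
  fix c u assume "u \<in> omega_hyperplane n e"
  then show "qsmul (An_ideal n) c u \<in> omega_hyperplane n e"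
    by (auto simp: omega_hyperplane_def qsmul_cls cls_in_omega_hyperplane_iff omega_smult)
qed

lemma omega_hyperplane_plus_socle:
  fixes e :: "'a::field bipoly"
  assumes e: "omega n (e * bimonom 0 (2*n+2)) = 1"
  shows "{qadd (An_ideal n) u s |u s. u \<in> omega_hyperplane n e \<and> s \<in> socle (An_ideal n)}
    = qmax (An_ideal n)"
proof (intro equalityI subsetI)
  fix A :: "'a bipoly set"
  assume "A \<in> {qadd (An_ideal n) u s |u s. u \<in> omega_hyperplane n e \<and> s \<in> socle (An_ideal n)}"
  then show "A \<in> qmax (An_ideal n)"
    by (auto simp: omega_hyperplane_def socle_An_ideal_iff[OF n2] qadd_cls cls_An_ideal_in_qmax_iff
        bicoeff_bimonom)
next
  fix A :: "'a bipoly set"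
  assume "A \<in> qmax (An_ideal n)"
  then obtain p where p: "A = cls (An_ideal n) p" "bicoeff p 0 0 = 0"
    by (auto simp: qmax_iff)
  let ?c = "omega n (e * p)" and ?s = "smult [:omega n (e * p):] (bimonom 0 (2*n+2))"
  have "cls (An_ideal n) (p - ?s) \<in> omega_hyperplane n e"
    using p(2) e by (simp add: cls_in_omega_hyperplane_iff bicoeff_bimonom right_diff_distrib omega_diff omega_smult)
  moreover have "cls (An_ideal n) ?s \<in> socle (An_ideal n)"
    by (auto simp: socle_An_ideal_iff[OF n2])
  moreover have "A = qadd (An_ideal n) (cls (An_ideal n) (p - ?s)) (cls (An_ideal n) ?s)"
    using p by (simp add: qadd_cls)
  ultimately show "A \<in> {qadd (An_ideal n) u s |u s. u \<in> omega_hyperplane n e \<and> s \<in> socle (An_ideal n)}"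
    by blast
qed

lemma omega_hyperplane_inter_socle:
  fixes e :: "'a::field bipoly"
  assumes e: "omega n (e * bimonom 0 (2*n+2)) = 1"
  shows "omega_hyperplane n e \<inter> socle (An_ideal n) = {qzero (An_ideal n)}"
proof (intro equalityI subsetI)
  let ?s = "\<lambda>c. cls (An_ideal n) (smult [:c:] (bimonom 0 (2*n+2)) :: 'a bipoly)"
  have s_hyp: "?s c \<in> omega_hyperplane n e \<longleftrightarrow> c = 0" for c
    using e by (simp add: cls_in_omega_hyperplane_iff bicoeff_bimonom omega_smult)
  fix A :: "'a bipoly set"
  show "A \<in> {qzero (An_ideal n)}" if A: "A \<in> omega_hyperplane n e \<inter> socle (An_ideal n)"
  proof -
    obtain c where "A = ?s c" "?s c \<in> omega_hyperplane n e"
      using A by (auto simp: socle_An_ideal_iff[OF n2])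
    with s_hyp show ?thesis
      by (simp add: qzero_def)
  qed
  show "A \<in> omega_hyperplane n e \<inter> socle (An_ideal n)" if "A \<in> {qzero (An_ideal n)}"
  proof -
    have "A = ?s 0"
      using that by (simp add: qzero_def)
    moreover have "?s 0 \<in> socle (An_ideal n)"
      unfolding socle_An_ideal_iff[OF n2] by blast
    ultimately show ?thesis
      using s_hyp[of 0] by blast
  qed
qed

lemma compl_hyperplane_omega_hyperplane:
  fixes e :: "'a::field bipoly"
  assumes "omega n (e * bimonom 0 (2*n+2)) = 1"
  shows "compl_hyperplane (An_ideal n) (omega_hyperplane n e)"
  unfolding compl_hyperplane_def
proof (intro conjI qsubspace_omega_hyperplane omega_hyperplane_plus_socle[OF assms]
    omega_hyperplane_inter_socle[OF assms])
  show "omega_hyperplane n e \<subseteq> qmax (An_ideal n)"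
    by (auto simp: omega_hyperplane_def cls_An_ideal_in_qmax_iff)
qed

lemma compl_hyperplane_omega_hyperplane_1:
  "compl_hyperplane (An_ideal n) (omega_hyperplane n (1 :: 'a::field bipoly))"
  by (rule compl_hyperplane_omega_hyperplane) (simp only: mult_1 omega_socle[OF n2])

lemma compl_hyperplane_omega_hyperplane_1_plus_y:
  "compl_hyperplane (An_ideal n) (omega_hyperplane n (1 + varY :: 'a::field bipoly))"
  by (rule compl_hyperplane_omega_hyperplane)
    (simp only: distrib_right mult_1 omega_add omega_socle[OF n2] omega_y_socle[OF n2]
      add_0_right)

end

section \<open>Leading coefficients of omega on images of monomials\<close>

context
  fixes n :: nat
  assumes n2: "2 \<le> n"
begin

lemma omega_eq_0_if_wvanishes_below:
  assumes w: "wvanishes_below 1 1 K P" and K: "3*n+2 \<le> K"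
  shows "omega n P = 0"
  using wvanishes_belowD[OF w, of 0 "2*n+2"] wvanishes_belowD[OF w, of n "n+2"]
    wvanishes_belowD[OF w, of "2*n" 2] wvanishes_belowD[OF w, of "3*n" 1] K n2
  by (simp add: omega_def)

lemma omega_y_mult_power_3n:
  fixes q :: "'a::comm_ring_1 bipoly"
  assumes q00: "bicoeff q 0 0 = 0"
  shows "omega n (bimonom 0 1 * q^(3*n)) = bicoeff q 1 0 ^ (3*n)"
proof -
  have w: "wvanishes_below 1 1 (3*n) (q^(3*n))"
    using wvanishes_below_power[OF wvanishes_below_1[OF _ _ q00], of 1 1 "3*n"] by simp
  have "bicoeff (q^(3*n)) 0 (2*n+1) = 0" "bicoeff (q^(3*n)) n (n+1) = 0" "bicoeff (q^(3*n)) (2*n) 1 = 0"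
    using n2 by (auto intro!: wvanishes_belowD[OF w])
  moreover have "bicoeff (q^(3*n)) (3*n) 0 = bicoeff q 1 0 ^ (3*n)"
    using coeff_power_vanishes_below[OF vanishes_below_ycoeff_1[OF q00], of "3*n"]
    by (simp add: coeff_ycoeff[symmetric] ycoeff_0_power)
  ultimately show ?thesis
    by (simp add: omega_bimonom_mult)
qed

lemma omega_mult_power_2n1:
  fixes p q :: "'a::comm_ring_1 bipoly"
  assumes p00: "bicoeff p 0 0 = 0" and q00: "bicoeff q 0 0 = 0" and q10: "bicoeff q 1 0 = 0"
  shows "omega n (p * q^(2*n+1)) = bicoeff p 0 1 * bicoeff q 0 1 ^ (2*n+1)"
proof -
  have "wvanishes_below 1 2 (1 + (2*n+1)*2) (p * q^(2*n+1))"
    by (intro wvanishes_below_mult wvanishes_below_1 wvanishes_below_power wvanishes_below_1_2_2 p00 q00 q10) simp_all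
  then have "bicoeff (p * q^(2*n+1)) n (n+2) = 0" "bicoeff (p * q^(2*n+1)) (2*n) 2 = 0"
      "bicoeff (p * q^(2*n+1)) (3*n) 1 = 0"
    using n2 by (auto intro!: wvanishes_belowD)
  moreover have "bicoeff (p * q^(2*n+1)) 0 (2*n+2) = bicoeff p 0 1 * bicoeff q 0 1 ^ (2*n+1)"
  proof -
    have v: "vanishes_below (2*n+1) (coeff q 0 ^ (2*n+1))"
      using vanishes_below_power[OF vanishes_below_coeff_1[OF q00], of "2*n+1"] by simp
    have "bicoeff (p * q^(2*n+1)) 0 (2*n+2) = coeff (coeff p 0 * coeff q 0 ^ (2*n+1)) (1 + (2*n+1))"
      by (simp only: bicoeff_def coeff_mult_0 coeff_0_power) simp
    also have "\<dots> = coeff (coeff p 0) 1 * coeff (coeff q 0 ^ (2*n+1)) (2*n+1)"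
      by (rule coeff_mult_vanishes_below[OF vanishes_below_coeff_1[OF p00] v])
    also have "coeff (coeff q 0 ^ (2*n+1)) (2*n+1) = coeff (coeff q 0) 1 ^ (2*n+1)"
      using coeff_power_vanishes_below[OF vanishes_below_coeff_1[OF q00], of "2*n+1"] by simp
    finally show ?thesis
      by (simp add: bicoeff_def)
  qed
  ultimately show ?thesis
    by (simp add: omega_def)
qed

lemma omega_y_mult_power_2n1:
  fixes q :: "'a::comm_ring_1 bipoly"
  assumes q00: "bicoeff q 0 0 = 0" and q10: "bicoeff q 1 0 = 0"
  shows "omega n (bimonom 0 1 * q^(2*n+1)) = bicoeff q 0 1 ^ (2*n+1)"
proof -
  have "wvanishes_below 1 2 ((2*n+1)*2) (q^(2*n+1))"
    by (intro wvanishes_below_power wvanishes_below_1_2_2 q00 q10)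
  then have "bicoeff (q^(2*n+1)) n (n+1) = 0" "bicoeff (q^(2*n+1)) (2*n) 1 = 0"
      "bicoeff (q^(2*n+1)) (3*n) 0 = 0"
    using n2 by (auto intro!: wvanishes_belowD)
  moreover have "bicoeff (q^(2*n+1)) 0 (2*n+1) = bicoeff q 0 1 ^ (2*n+1)"
    using coeff_power_vanishes_below[OF vanishes_below_coeff_1[OF q00], of "2*n+1"]
    by (simp only: bicoeff_def coeff_0_power mult_1_right)
  ultimately show ?thesis
    by (simp add: omega_bimonom_mult)
qed

lemma omega_power_2n1:
  fixes q :: "'a::comm_ring_1 bipoly"
  assumes q00: "bicoeff q 0 0 = 0" and q10: "bicoeff q 1 0 = 0" and q20: "bicoeff q 2 0 = 0"
  shows "omega n (q^(2*n+1)) = of_nat (2*n+1) * bicoeff q 0 1 ^ (2*n) * bicoeff q 0 2"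
proof -
  have "wvanishes_below 1 3 ((2*n+1)*3) (q^(2*n+1))"
    by (intro wvanishes_below_power wvanishes_below_1_3_3 q00 q10 q20)
  then have "bicoeff (q^(2*n+1)) n (n+2) = 0" "bicoeff (q^(2*n+1)) (2*n) 2 = 0"
      "bicoeff (q^(2*n+1)) (3*n) 1 = 0"
    using n2 by (auto intro!: wvanishes_belowD)
  moreover have "bicoeff (q^(2*n+1)) 0 (2*n+2) = of_nat (2*n+1) * bicoeff q 0 1 ^ (2*n) * bicoeff q 0 2"
    using coeff_power_vanishes_below_Suc[OF vanishes_below_coeff_1[OF q00], of "2*n+1"]
    by (simp only: bicoeff_def coeff_0_power mult_1_right add_diff_cancel_right' one_add_one)
      (simp add: add.commute)
  ultimately show ?thesis
    by (simp add: omega_def)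
qed

lemma omega_power_3n:
  fixes p :: "'a::comm_ring_1 bipoly"
  assumes p00: "bicoeff p 0 0 = 0" and p01: "bicoeff p 0 1 = 0"
  shows "omega n (p^(3*n)) = of_nat (3*n) * bicoeff p 1 0 ^ (3*n-1) * bicoeff p 1 1"
proof -
  have "wvanishes_below 3 2 ((3*n)*3) (p^(3*n))"
    by (intro wvanishes_below_power wvanishes_below_3_2_3 p00 p01)
  then have "bicoeff (p^(3*n)) 0 (2*n+2) = 0" "bicoeff (p^(3*n)) n (n+2) = 0"
      "bicoeff (p^(3*n)) (2*n) 2 = 0"
    using n2 by (auto intro!: wvanishes_belowD)
  moreover have "bicoeff (p^(3*n)) (3*n) 1 = of_nat (3*n) * bicoeff p 1 0 ^ (3*n-1) * bicoeff p 1 1"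
  proof -
    have v: "vanishes_below (3*n-1) (ycoeff 0 p ^ (3*n-1))"
      using vanishes_below_power[OF vanishes_below_ycoeff_1[OF p00], of "3*n-1"] by simp
    have "bicoeff (p^(3*n)) (3*n) 1 = of_nat (3*n) * coeff (ycoeff 0 p ^ (3*n-1) * ycoeff 1 p) (3*n)"
      by (simp only: coeff_ycoeff[symmetric] ycoeff_1_power coeff_smult)
    also have "\<dots> = of_nat (3*n) * (coeff (ycoeff 0 p ^ (3*n-1)) (3*n-1) * coeff (ycoeff 1 p) 1)"
      using coeff_mult_vanishes_below[OF v vanishes_below_ycoeff_1[OF p01]] n2 by simp
    also have "coeff (ycoeff 0 p ^ (3*n-1)) (3*n-1) = coeff (ycoeff 0 p) 1 ^ (3*n-1)"
      using coeff_power_vanishes_below[OF vanishes_below_ycoeff_1[OF p00], of "3*n-1"] by simp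
    finally show ?thesis
      by (simp add: coeff_ycoeff)
  qed
  ultimately show ?thesis
    by (simp add: omega_def)
qed

lemma n_minus_1_index_facts:
  "n - (n-1) = 1" "2*n - (n-1) = n+1" "3*n - (n-1) = 2*n+1" "n+2-1 = n+1"
  "n-1 \<noteq> 0" "n-1 \<le> n" "n-1 \<le> 2*n" "n-1 \<le> 3*n"
  using n2 by auto

lemma omega_x_y_mult_power_2n1:
  fixes p :: "'a::comm_ring_1 bipoly"
  assumes p00: "bicoeff p 0 0 = 0" and p01: "bicoeff p 0 1 = 0"
  shows "omega n (bimonom (n-1) 1 * p^(2*n+1)) = bicoeff p 1 0 ^ (2*n+1)"
proof -
  have "wvanishes_below 3 2 ((2*n+1)*3) (p^(2*n+1))"
    by (intro wvanishes_below_power wvanishes_below_3_2_3 p00 p01)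
  then have "bicoeff (p^(2*n+1)) 1 (n+1) = 0" "bicoeff (p^(2*n+1)) (n+1) 1 = 0"
    using n2 by (auto intro!: wvanishes_belowD)
  moreover have "bicoeff (p^(2*n+1)) (2*n+1) 0 = bicoeff p 1 0 ^ (2*n+1)"
    using coeff_power_vanishes_below[OF vanishes_below_ycoeff_1[OF p00], of "2*n+1"]
    by (simp only: coeff_ycoeff ycoeff_0_power[symmetric] mult_1_right)
  ultimately show ?thesis
    using n_minus_1_index_facts by (simp add: omega_bimonom_mult)
qed

lemma omega_x_mult_power_2n1:
  fixes p :: "'a::comm_ring_1 bipoly"
  assumes p00: "bicoeff p 0 0 = 0" and p01: "bicoeff p 0 1 = 0"
  shows "omega n (bimonom (n-1) 0 * p^(2*n+1)) = of_nat (2*n+1) * bicoeff p 1 0 ^ (2*n) * bicoeff p 1 1"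
proof -
  have "wvanishes_below 3 2 ((2*n+1)*3) (p^(2*n+1))"
    by (intro wvanishes_below_power wvanishes_below_3_2_3 p00 p01)
  then have "bicoeff (p^(2*n+1)) 1 (n+2) = 0" "bicoeff (p^(2*n+1)) (n+1) 2 = 0"
    using n2 by (auto intro!: wvanishes_belowD)
  moreover have "bicoeff (p^(2*n+1)) (2*n+1) 1 = of_nat (2*n+1) * bicoeff p 1 0 ^ (2*n) * bicoeff p 1 1"
  proof -
    have v: "vanishes_below (2*n) (ycoeff 0 p ^ (2*n))"
      using vanishes_below_power[OF vanishes_below_ycoeff_1[OF p00], of "2*n"] by simp
    have "bicoeff (p^(2*n+1)) (2*n+1) 1 = of_nat (2*n+1) * coeff (ycoeff 0 p ^ (2*n) * ycoeff 1 p) (2*n+1)"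
      by (simp only: coeff_ycoeff[symmetric] ycoeff_1_power coeff_smult add_diff_cancel_right')
    also have "\<dots> = of_nat (2*n+1) * (coeff (ycoeff 0 p ^ (2*n)) (2*n) * coeff (ycoeff 1 p) 1)"
      by (simp only: coeff_mult_vanishes_below[OF v vanishes_below_ycoeff_1[OF p01]])
    also have "coeff (ycoeff 0 p ^ (2*n)) (2*n) = coeff (ycoeff 0 p) 1 ^ (2*n)"
      using coeff_power_vanishes_below[OF vanishes_below_ycoeff_1[OF p00], of "2*n"] by simp
    finally show ?thesis
      by (simp add: coeff_ycoeff)
  qed
  ultimately show ?thesis
    using n_minus_1_index_facts by (simp add: omega_bimonom_mult)
qed

lemma coeff_1_mult_power:
  fixes p q :: "'a::comm_ring_1 bipoly"
  shows "coeff (p * q^(n+1)) 1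
    = coeff p 0 * (of_nat (n+1) * coeff q 0 ^ n * coeff q 1) + coeff p 1 * coeff q 0 ^ (n+1)"
  by (simp only: coeff_mult_1 coeff_power_1 coeff_0_power add_diff_cancel_right')

lemma omega_x_y_mult_mult_power:
  fixes p q :: "'a::comm_ring_1 bipoly"
  assumes p00: "bicoeff p 0 0 = 0" and p01: "bicoeff p 0 1 = 0"
    and q00: "bicoeff q 0 0 = 0" and q10: "bicoeff q 1 0 = 0"
  shows "omega n (bimonom (n-1) 1 * (p * q^(n+1))) = bicoeff p 1 0 * bicoeff q 0 1 ^ (n+1)"
proof -
  have "wvanishes_below 1 2 (1 + (n+1)*2) (p * q^(n+1))"
    by (intro wvanishes_below_mult wvanishes_below_1 wvanishes_below_power wvanishes_below_1_2_2 p00 q00 q10) simp_all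
  then have "bicoeff (p * q^(n+1)) (n+1) 1 = 0" "bicoeff (p * q^(n+1)) (2*n+1) 0 = 0"
    using n2 by (auto intro!: wvanishes_belowD)
  moreover have "bicoeff (p * q^(n+1)) 1 (n+1) = bicoeff p 1 0 * bicoeff q 0 1 ^ (n+1)"
  proof -
    have "vanishes_below (2 + (0 + n*1 + 0)) (coeff p 0 * (of_nat (n+1) * coeff q 0 ^ n * coeff q 1))"
      by (intro vanishes_below_mult vanishes_below_coeff_2 vanishes_below_power vanishes_below_coeff_1
          vanishes_below_0 p00 p01 q00)
    then have t1: "coeff (coeff p 0 * (of_nat (n+1) * coeff q 0 ^ n * coeff q 1)) (n+1) = 0"
      by (rule vanishes_belowD) simp
    have v: "vanishes_below (n+1) (coeff q 0 ^ (n+1))"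
      using vanishes_below_power[OF vanishes_below_coeff_1[OF q00], of "n+1"] by simp
    have t2: "coeff (coeff p 1 * coeff q 0 ^ (n+1)) (n+1) = coeff (coeff p 1) 0 * coeff (coeff q 0 ^ (n+1)) (n+1)"
      using coeff_mult_vanishes_below[OF vanishes_below_0 v] by simp
    have t3: "coeff (coeff q 0 ^ (n+1)) (n+1) = coeff (coeff q 0) 1 ^ (n+1)"
      using coeff_power_vanishes_below[OF vanishes_below_coeff_1[OF q00], of "n+1"] by simp
    show ?thesis
      unfolding bicoeff_def coeff_1_mult_power coeff_add t1 t2 t3 by simp
  qed
  ultimately show ?thesis
    using n_minus_1_index_facts by (simp add: omega_bimonom_mult)
qed

lemma omega_x_mult_mult_power:
  fixes p q :: "'a::comm_ring_1 bipoly"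
  assumes p00: "bicoeff p 0 0 = 0" and p01: "bicoeff p 0 1 = 0"
    and q00: "bicoeff q 0 0 = 0" and q10: "bicoeff q 1 0 = 0" and q20: "bicoeff q 2 0 = 0"
  shows "omega n (bimonom (n-1) 0 * (p * q^(n+1)))
    = of_nat (n+1) * bicoeff p 1 0 * bicoeff q 0 1 ^ n * bicoeff q 0 2 + bicoeff p 1 1 * bicoeff q 0 1 ^ (n+1)"
proof -
  have "wvanishes_below 1 3 (1 + (n+1)*3) (p * q^(n+1))"
    by (intro wvanishes_below_mult wvanishes_below_1 wvanishes_below_power wvanishes_below_1_3_3 p00 q00 q10 q20)
      simp_all
  then have "bicoeff (p * q^(n+1)) (n+1) 2 = 0" "bicoeff (p * q^(n+1)) (2*n+1) 1 = 0"
    using n2 by (auto intro!: wvanishes_belowD)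
  moreover have "bicoeff (p * q^(n+1)) 1 (n+2)
    = of_nat (n+1) * bicoeff p 1 0 * bicoeff q 0 1 ^ n * bicoeff q 0 2 + bicoeff p 1 1 * bicoeff q 0 1 ^ (n+1)"
  proof -
    have "vanishes_below (2 + (0 + n*1 + 1)) (coeff p 0 * (of_nat (n+1) * coeff q 0 ^ n * coeff q 1))"
      by (intro vanishes_below_mult vanishes_below_coeff_2 vanishes_below_power vanishes_below_coeff_1
          vanishes_below_0 p00 p01 q00 q10)
    then have t1: "coeff (coeff p 0 * (of_nat (n+1) * coeff q 0 ^ n * coeff q 1)) (n+2) = 0"
      by (rule vanishes_belowD) simp
    have v: "vanishes_below (n+1) (coeff q 0 ^ (n+1))"
      using vanishes_below_power[OF vanishes_below_coeff_1[OF q00], of "n+1"] by simp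
    have t2: "coeff (coeff p 1 * coeff q 0 ^ (n+1)) (n+2)
        = coeff (coeff p 1) 0 * coeff (coeff q 0 ^ (n+1)) (n+2)
          + coeff (coeff p 1) 1 * coeff (coeff q 0 ^ (n+1)) (n+1)"
      using coeff_mult_vanishes_below_Suc[OF vanishes_below_0 v] by simp
    have t3: "coeff (coeff q 0 ^ (n+1)) (n+1) = coeff (coeff q 0) 1 ^ (n+1)"
      using coeff_power_vanishes_below[OF vanishes_below_coeff_1[OF q00], of "n+1"] by simp
    have t4: "coeff (coeff q 0 ^ (n+1)) (n+2) = of_nat (n+1) * coeff (coeff q 0) 1 ^ n * coeff (coeff q 0) 2"
      using coeff_power_vanishes_below_Suc[OF vanishes_below_coeff_1[OF q00], of "n+1"]
      by (simp add: numeral_2_eq_2)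
    show ?thesis
      unfolding bicoeff_def coeff_1_mult_power coeff_add t1 t2 t3 t4 by (simp add: algebra_simps)
  qed
  ultimately show ?thesis
    using n_minus_1_index_facts by (simp add: omega_bimonom_mult)
qed

lemma bicoeff_y_relation_image:
  fixes p q :: "'a::comm_ring_1 bipoly"
  assumes p00: "bicoeff p 0 0 = 0" and p01: "bicoeff p 0 1 = 0"
    and q00: "bicoeff q 0 0 = 0" and q10: "bicoeff q 1 0 = 0"
  shows "bicoeff (p^n * q^2 - q^(n+2)) (n+2) 1 = 2 * bicoeff p 1 0 ^ n * bicoeff q 2 0 * bicoeff q 0 1"
proof -
  let ?P0 = "ycoeff 0 p" and ?P1 = "ycoeff 1 p" and ?Q0 = "ycoeff 0 q" and ?Q1 = "ycoeff 1 q"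
  have vq: "vanishes_below 2 ?Q0"
    by (rule vanishes_below_ycoeff_2[OF q00 q10])
  have vp: "vanishes_below (n*1) (?P0 ^ n)"
    by (intro vanishes_below_power vanishes_below_ycoeff_1 p00)
  have t1: "ycoeff 1 (p^n * q^2)
      = ?P0 ^ n * smult (of_nat 2) (?Q0 ^ 1 * ?Q1) + smult (of_nat n) (?P0 ^ (n-1) * ?P1) * ?Q0 ^ 2"
    by (simp only: ycoeff_1_mult ycoeff_1_power ycoeff_0_power) simp
  have t2: "ycoeff 1 (q^(n+2)) = smult (of_nat (n+2)) (?Q0 ^ (n+1) * ?Q1)"
    by (simp only: ycoeff_1_power) simp
  have v2: "vanishes_below 2 (smult (of_nat 2) (?Q0 ^ 1 * ?Q1))"
    using vanishes_below_smult[OF vanishes_below_mult[OF vq vanishes_below_0]] by simp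
  have t3: "coeff (?P0 ^ n * smult (of_nat 2) (?Q0 ^ 1 * ?Q1)) (n+2)
      = coeff (?P0 ^ n) n * coeff (smult (of_nat 2) (?Q0 ^ 1 * ?Q1)) 2"
    using coeff_mult_vanishes_below[OF vp v2] by simp
  have t4: "coeff (?Q0 ^ 1 * ?Q1) 2 = coeff ?Q0 2 * coeff ?Q1 0"
    using coeff_mult_vanishes_below[OF vq vanishes_below_0, of ?Q1] by simp
  have t5: "coeff (?P0 ^ n) n = coeff ?P0 1 ^ n"
    using coeff_power_vanishes_below[OF vanishes_below_ycoeff_1[OF p00], of n] by simp
  have "vanishes_below ((n-1)*1 + 1 + 2*2) (?P0 ^ (n-1) * ?P1 * ?Q0 ^ 2)"
    by (intro vanishes_below_mult vanishes_below_power vanishes_below_ycoeff_1 p00 p01 vq)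
  then have t6: "coeff (smult (of_nat n) (?P0 ^ (n-1) * ?P1) * ?Q0 ^ 2) (n+2) = 0"
    using n2 by (simp add: vanishes_belowD mult_smult_left)
  have "vanishes_below ((n+1)*2 + 0) (?Q0 ^ (n+1) * ?Q1)"
    by (intro vanishes_below_mult vanishes_below_power vq vanishes_below_0)
  then have t7: "coeff (?Q0 ^ (n+1) * ?Q1) (n+2) = 0"
    using n2 by (intro vanishes_belowD) auto
  have "bicoeff (p^n * q^2 - q^(n+2)) (n+2) 1 = coeff (ycoeff 1 (p^n * q^2)) (n+2) - coeff (ycoeff 1 (q^(n+2))) (n+2)"
    by (simp add: coeff_ycoeff)
  also have "\<dots> = coeff ?P0 1 ^ n * (2 * (coeff ?Q0 2 * coeff ?Q1 0))"
    unfolding t1 t2 coeff_add t3 t6 t7 coeff_smult t4 t5 by simp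
  finally show ?thesis
    by (simp add: coeff_ycoeff algebra_simps)
qed

end

section \<open>Automorphisms of the maximal ideal\<close>

lemma max_aut_in_qmax: "max_aut I f \<Longrightarrow> a \<in> qmax I \<Longrightarrow> f a \<in> qmax I"
  by (auto simp: max_aut_def bij_betw_def)

context
  fixes I :: "'a::field bipoly set" and f :: "'a bipoly set \<Rightarrow> 'a bipoly set" and p q :: "'a bipoly"
  assumes ideal: "is_ideal I"
    and const_0: "I \<subseteq> {r. bicoeff r 0 0 = 0}"
    and aut: "max_aut I f"
    and fx: "f (cls I varX) = cls I p"
    and fy: "f (cls I varY) = cls I q"
begin

lemma cls_bimonom_in_qmax: "(i, j) \<noteq> (0, 0) \<Longrightarrow> cls I (bimonom i j) \<in> qmax I"
  by (auto simp: cls_in_qmax_iff[OF ideal const_0] bicoeff_bimonom)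

lemma max_aut_qmul: "a \<in> qmax I \<Longrightarrow> b \<in> qmax I \<Longrightarrow> f (qmul I a b) = qmul I (f a) (f b)"
  using aut by (simp add: max_aut_def)

lemma max_aut_qzero: "f (qzero I) = qzero I"
proof -
  have z: "qzero I \<in> qmax I"
    by (simp add: qzero_def cls_in_qmax_iff[OF ideal const_0])
  then obtain r where r: "f (qzero I) = cls I r"
    using max_aut_in_qmax[OF aut z] by (auto simp: qmax_iff)
  have "f (qzero I) = f (qsmul I 0 (qzero I))"
    by (simp add: qzero_def qsmul_cls[OF ideal])
  also have "\<dots> = qsmul I 0 (f (qzero I))"
    using aut z by (simp add: max_aut_def)
  also have "\<dots> = qzero I"
    using r by (simp add: qsmul_cls[OF ideal] qzero_def)
  finally show ?thesis .
qed

lemma max_aut_cls_bimonom_x: "1 \<le> i \<Longrightarrow> f (cls I (bimonom i 0)) = cls I (p ^ i)"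
proof (induction i rule: dec_induct)
  case base
  then show ?case
    using fx by (simp add: varX_eq_bimonom)
next
  case (step i)
  have "cls I (bimonom (Suc i) 0) = qmul I (cls I (bimonom i 0)) (cls I varX)"
    by (simp add: qmul_cls[OF ideal] varX_eq_bimonom bimonom_mult)
  then show ?case
    using step fx max_aut_qmul[OF cls_bimonom_in_qmax cls_bimonom_in_qmax, of i 0 1 0]
    by (simp add: qmul_cls[OF ideal] varX_eq_bimonom mult.commute)
qed

lemma max_aut_cls_bimonom: "(i, j) \<noteq> (0, 0) \<Longrightarrow> f (cls I (bimonom i j)) = cls I (p ^ i * q ^ j)"
proof (induction j)
  case 0
  then show ?case
    using max_aut_cls_bimonom_x[of i] by simp
next
  case (Suc j)
  show ?case
  proof (cases "(i, j) = (0, 0)")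
    case True
    then show ?thesis
      using fy by (simp add: varY_eq_bimonom)
  next
    case False
    have "cls I (bimonom i (Suc j)) = qmul I (cls I (bimonom i j)) (cls I varY)"
      by (simp add: qmul_cls[OF ideal] varY_eq_bimonom bimonom_mult)
    then show ?thesis
      using Suc.IH[OF False] fy max_aut_qmul[OF cls_bimonom_in_qmax[OF False] cls_bimonom_in_qmax, of 0 1]
      by (simp add: qmul_cls[OF ideal] varY_eq_bimonom mult_ac)
  qed
qed

lemma max_aut_bimonom_in_ideal:
  "(i, j) \<noteq> (0, 0) \<Longrightarrow> bimonom i j \<in> I \<Longrightarrow> p ^ i * q ^ j \<in> I"
  using max_aut_cls_bimonom max_aut_qzero by (metis cls_eq_qzero_iff[OF ideal])

lemma max_aut_bimonom_diff_in_ideal: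
  "(i, j) \<noteq> (0, 0) \<Longrightarrow> (k, l) \<noteq> (0, 0) \<Longrightarrow> bimonom i j - bimonom k l \<in> I \<Longrightarrow>
    p ^ i * q ^ j - p ^ k * q ^ l \<in> I"
  using max_aut_cls_bimonom by (metis cls_eq_iff[OF ideal])

end

section \<open>Field arithmetic under the characteristic hypothesis\<close>

lemma of_nat_ne_0_if_coprime_CHAR:
  assumes "m \<noteq> 0" "CHAR('a::field) = 0 \<or> coprime CHAR('a) m"
  shows "of_nat m \<noteq> (0::'a)"
proof
  assume "of_nat m = (0::'a)"
  then have dvd: "CHAR('a) dvd m"
    by (simp add: of_nat_eq_0_iff_char_dvd)
  show False
  proof (cases "CHAR('a) = 0")
    case True
    then show False
      using dvd assms(1) by simp
  next
    case False
    then have "coprime CHAR('a) m"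
      using assms(2) by simp
    then have "is_unit CHAR('a)"
      using coprime_common_divisor[OF _ dvd_refl dvd] by blast
    then show False
      by simp
  qed
qed

lemma two_ne_0_if_consecutive_ne_0:
  assumes "of_nat n \<noteq> (0::'a::idom)" "of_nat (n-1) \<noteq> (0::'a)"
  shows "(2::'a) \<noteq> 0"
proof
  assume two: "(2::'a) = 0"
  have "even (n * (n-1))"
    by (cases "even n") auto
  then obtain k where k: "n * (n-1) = 2 * k"
    by (rule evenE)
  have "(of_nat n * of_nat (n-1) :: 'a) = of_nat (n * (n-1))"
    by simp
  also have "\<dots> = 0"
    using k two by simp
  finally show False
    using assms by simp
qed

text \<open>Eliminating e leaves n (n - 1) d^(2n+1) c = 0, because 2n (2n+1) - 3n (n+1) = n (n-1).\<close>

lemma An_relations_imp_eq_0: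
  fixes a d e c :: "'a::field"
  assumes n2: "2 \<le> n" and d: "d \<noteq> 0" and a: "a \<noteq> 0"
    and h1: "a^(2*n) = d^(n+1)" and h2: "a^(3*n) = d^(2*n+1)"
    and E5: "of_nat (2*n+1) * a^(2*n) * e = of_nat (n+1) * a * d^n * c + e * d^(n+1)"
    and AB: "of_nat (2*n+1) * d^(2*n) * c = of_nat (3*n) * a^(3*n-1) * e"
    and c1: "of_nat n \<noteq> (0::'a)" and c2: "of_nat (n-1) \<noteq> (0::'a)"
  shows "c = 0"
proof -
  have "d^n * (of_nat (2*n) * d * e) = d^n * (of_nat (n+1) * a * c)"
    using E5 h1 by (simp add: algebra_simps)
  then have E5': "of_nat (2*n) * d * e = of_nat (n+1) * a * c"
    using d by simp
  have "3*n = Suc (3*n-1)"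
    using n2 by simp
  then have a3: "a^(3*n) = a^(3*n-1) * a"
    by (metis power_Suc2)
  have "of_nat (2*n) * d * (of_nat (2*n+1) * d^(2*n) * c) = of_nat (3*n) * a^(3*n-1) * (of_nat (2*n) * d * e)"
    using AB by (simp add: algebra_simps)
  also have "\<dots> = of_nat (3*n) * of_nat (n+1) * a^(3*n) * c"
    using E5' a3 by (simp add: algebra_simps)
  also have "\<dots> = of_nat (3*n) * of_nat (n+1) * d^(2*n+1) * c"
    using h2 by simp
  finally have eq: "(of_nat (2*n) * of_nat (2*n+1)) * d^(2*n+1) * c = (of_nat (3*n) * of_nat (n+1)) * d^(2*n+1) * c"
    by (simp add: algebra_simps)
  have "2*n*(2*n+1) = 3*n*(n+1) + n*(n-1)"
    using n2 by (cases n) (auto simp: algebra_simps)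
  then have "(of_nat (2*n) * of_nat (2*n+1) :: 'a) = of_nat (3*n) * of_nat (n+1) + of_nat n * of_nat (n-1)"
    by (simp only: of_nat_mult[symmetric] of_nat_add[symmetric])
  then have "(of_nat n * of_nat (n-1)) * d^(2*n+1) * c
      = (of_nat (2*n) * of_nat (2*n+1) - of_nat (3*n) * of_nat (n+1)) * d^(2*n+1) * c"
    by simp
  also have "\<dots> = 0"
    using eq by (simp only: left_diff_distrib diff_self)
  finally show "c = 0"
    using c1 c2 d by simp
qed

section \<open>No automorphism of the maximal ideal of A_n relates the two hyperplanes\<close>

lemma y_2n1_eq_x_3n_mod_An_ideal:
  assumes "2 \<le> n"
  shows "(bimonom 0 (2*n+1) - bimonom (3*n) 0 :: 'a::field bipoly) \<in> An_ideal n"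
proof -
  obtain m where m: "n = m + 1"
    using assms by (metis add.commute le_Suc_ex one_le_numeral order_trans)
  have idx: "m + 2 = n + 1" "m + (n + 2) = 2*n+1" "m + (2*n+1) = 3*n" "m + 1 = n"
    using m by simp_all
  have "bimonom 0 m * (bimonom n 2 - bimonom 0 (n+2)) = (bimonom n (n+1) - bimonom 0 (2*n+1) :: 'a bipoly)"
    unfolding right_diff_distrib bimonom_mult idx add_0 ..
  moreover have "bimonom m 0 * (bimonom (2*n+1) 0 - bimonom 1 (n+1))
      = (bimonom (3*n) 0 - bimonom n (n+1) :: 'a bipoly)"
    unfolding right_diff_distrib bimonom_mult idx add_0 add_0_right ..
  ultimately have "(bimonom 0 (2*n+1) - bimonom (3*n) 0 :: 'a bipoly)
      = - (bimonom 0 m * (bimonom n 2 - bimonom 0 (n+2)) + bimonom m 0 * (bimonom (2*n+1) 0 - bimonom 1 (n+1)))"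
    by simp
  then show ?thesis
    using An_ideal_generators(2,3)[of n] by (metis ideal_add ideal_mult_left ideal_uminus is_ideal_An_ideal)
qed

context
  fixes n :: nat and f :: "'a::field bipoly set \<Rightarrow> 'a bipoly set" and p q :: "'a bipoly"
  assumes n2: "2 \<le> n"
    and aut: "max_aut (An_ideal n) f"
    and fx: "f (cls (An_ideal n) varX) = cls (An_ideal n) p"
    and fy: "f (cls (An_ideal n) varY) = cls (An_ideal n) q"
    and p00: "bicoeff p 0 0 = 0" and q00: "bicoeff q 0 0 = 0"
begin

lemmas An_aut_qzero = max_aut_qzero[OF is_ideal_An_ideal An_ideal_subset_bicoeff_0_0 aut fx fy]
  and An_aut_qmul = max_aut_qmul[OF is_ideal_An_ideal An_ideal_subset_bicoeff_0_0 aut fx fy]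
  and An_aut_cls_bimonom = max_aut_cls_bimonom[OF is_ideal_An_ideal An_ideal_subset_bicoeff_0_0 aut fx fy]
  and An_aut_bimonom_in_ideal = max_aut_bimonom_in_ideal[OF is_ideal_An_ideal An_ideal_subset_bicoeff_0_0 aut fx fy]
  and An_aut_bimonom_diff_in_ideal =
    max_aut_bimonom_diff_in_ideal[OF is_ideal_An_ideal An_ideal_subset_bicoeff_0_0 aut fx fy]

text \<open>The preimage of y is annihilated by y^(3n), so q^(3n) y = 0 in A_n.\<close>

lemma An_aut_bicoeff_q_1_0: "bicoeff q 1 0 = 0"
proof -
  let ?c = "cls (An_ideal n)"
  have "?c varY \<in> f ` qmax (An_ideal n)"
    using aut by (simp add: max_aut_def bij_betw_def cls_An_ideal_in_qmax_iff varY_eq_bimonom bicoeff_bimonom)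
  then obtain w where w: "w \<in> qmax (An_ideal n)" "f w = ?c varY"
    by blast
  then obtain r where r: "?c r \<in> qmax (An_ideal n)" "f (?c r) = ?c varY" "bicoeff r 0 0 = 0"
    by (auto simp: qmax_iff)
  have "omega n (bimonom k l * (bimonom 0 (3*n) * r)) = 0" for k l
  proof -
    have "l + 3*n \<le> 2*n+2 \<Longrightarrow> 2*n+2-(l+3*n) = 0"
      using n2 by simp
    then show ?thesis
      using r(3) n2 by (simp add: mult.assoc[symmetric] bimonom_mult omega_bimonom_mult)
  qed
  then have "qmul (An_ideal n) (?c (bimonom 0 (3*n))) (?c r) = qzero (An_ideal n)"
    by (simp add: qmul_cls cls_eq_qzero_iff in_An_ideal_iff_omega[OF n2])
  then have "qmul (An_ideal n) (f (?c (bimonom 0 (3*n)))) (f (?c r)) = qzero (An_ideal n)"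
    using An_aut_qmul[OF _ r(1), of "cls (An_ideal n) (bimonom 0 (3*n))"] An_aut_qzero n2
    by (simp add: cls_An_ideal_in_qmax_iff bicoeff_bimonom)
  then have "bimonom 0 1 * q^(3*n) \<in> An_ideal n"
    using An_aut_cls_bimonom[of 0 "3*n"] r(2) n2 by (simp add: qmul_cls cls_eq_qzero_iff varY_eq_bimonom mult.commute)
  then have "omega n (bimonom 0 1 * q^(3*n)) = 0"
    by (rule omega_An_ideal[OF n2])
  then show ?thesis
    using omega_y_mult_power_3n[OF n2 q00] n2 by simp
qed

text \<open>Otherwise q lies in m^2, so f kills the socle element y^(2n+2).\<close>

lemma An_aut_bicoeff_q_0_1: "bicoeff q 0 1 \<noteq> 0"
proof
  assume q01: "bicoeff q 0 1 = 0"
  have w: "wvanishes_below 1 1 ((2*n+2)*2) (q^(2*n+2))"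
    by (intro wvanishes_below_power wvanishes_below_1_1_2 q00 An_aut_bicoeff_q_1_0 q01)
  have "omega n (bimonom k l * q^(2*n+2)) = 0" for k l
    by (rule omega_eq_0_if_wvanishes_below[OF n2 wvanishes_below_mult[OF wvanishes_below_bimonom w]]) simp
  then have "f (cls (An_ideal n) (bimonom 0 (2*n+2))) = f (qzero (An_ideal n))"
    using An_aut_cls_bimonom[of 0 "2*n+2"] An_aut_qzero by (simp add: cls_eq_qzero_iff in_An_ideal_iff_omega[OF n2])
  moreover have "cls (An_ideal n) (bimonom 0 (2*n+2) :: 'a bipoly) \<in> qmax (An_ideal n)"
    "qzero (An_ideal n :: 'a bipoly set) \<in> qmax (An_ideal n)"
    by (simp_all add: cls_An_ideal_in_qmax_iff qzero_def bicoeff_bimonom)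
  moreover have "inj_on f (qmax (An_ideal n))"
    using aut by (simp add: max_aut_def bij_betw_def)
  ultimately have "cls (An_ideal n) (bimonom 0 (2*n+2) :: 'a bipoly) = qzero (An_ideal n)"
    by (metis inj_onD)
  then have "(bimonom 0 (2*n+2) :: 'a bipoly) \<in> An_ideal n"
    by (simp add: cls_eq_qzero_iff)
  then have "omega n (bimonom 0 (2*n+2) :: 'a bipoly) = 0"
    by (rule omega_An_ideal[OF n2])
  then show False
    using omega_socle[OF n2, where 'a='a] by simp
qed

lemma An_aut_bicoeff_p_0_1: "bicoeff p 0 1 = 0"
proof -
  have "p^1 * q^(2*n+1) \<in> An_ideal n"
    using n2 by (intro An_aut_bimonom_in_ideal bimonom_in_An_ideal_if_mixed[OF n2]) simp_all
  then have "bicoeff p 0 1 * bicoeff q 0 1 ^ (2*n+1) = 0"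
    using omega_An_ideal[OF n2] omega_mult_power_2n1[OF n2 p00 q00 An_aut_bicoeff_q_1_0] by (metis power_one_right)
  then show ?thesis
    using An_aut_bicoeff_q_0_1 by simp
qed

lemma An_aut_y_x_relation_in_ideal: "q^(2*n+1) - p^(3*n) \<in> An_ideal n"
  using An_aut_bimonom_diff_in_ideal[of 0 "2*n+1" "3*n" 0] y_2n1_eq_x_3n_mod_An_ideal[OF n2] n2 by simp

lemma An_aut_relation_3n:
  "bicoeff p 1 0 ^ (3*n) = bicoeff q 0 1 ^ (2*n+1)"
proof -
  have "omega n (bimonom 0 1 * (q^(2*n+1) - p^(3*n))) = 0"
    by (rule omega_An_ideal_mult[OF n2 An_aut_y_x_relation_in_ideal])
  then show ?thesis
    using omega_y_mult_power_2n1[OF n2 q00 An_aut_bicoeff_q_1_0] omega_y_mult_power_3n[OF n2 p00]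
    by (simp add: right_diff_distrib omega_diff)
qed

lemma An_aut_bicoeff_p_1_0: "bicoeff p 1 0 \<noteq> 0"
proof
  assume "bicoeff p 1 0 = 0"
  then have "bicoeff q 0 1 ^ (2*n+1) = 0"
    using An_aut_relation_3n n2 by (simp add: power_0_left)
  then show False
    using An_aut_bicoeff_q_0_1 by simp
qed

lemma An_aut_x_relation_in_ideal: "p^(2*n+1) - p * q^(n+1) \<in> An_ideal n"
  using An_aut_bimonom_diff_in_ideal[of "2*n+1" 0 1 "n+1"] An_ideal_generators(3)[of n] by simp

lemma An_aut_relation_2n:
  "bicoeff p 1 0 ^ (2*n) = bicoeff q 0 1 ^ (n+1)"
proof -
  have "omega n (bimonom (n-1) 1 * (p^(2*n+1) - p * q^(n+1))) = 0"
    by (rule omega_An_ideal_mult[OF n2 An_aut_x_relation_in_ideal])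
  then have "bicoeff p 1 0 * bicoeff p 1 0 ^ (2*n) = bicoeff p 1 0 * bicoeff q 0 1 ^ (n+1)"
    using omega_x_y_mult_power_2n1[OF n2 p00 An_aut_bicoeff_p_0_1]
      omega_x_y_mult_mult_power[OF n2 p00 An_aut_bicoeff_p_0_1 q00 An_aut_bicoeff_q_1_0]
    by (simp add: right_diff_distrib omega_diff)
  then show ?thesis
    using An_aut_bicoeff_p_1_0 by simp
qed

lemma An_aut_y_relation_in_ideal: "p^n * q^2 - q^(n+2) \<in> An_ideal n"
  using An_aut_bimonom_diff_in_ideal[of n 2 0 "n+2"] An_ideal_generators(2)[of n] n2 by simp

text \<open>Test against x^(2n-2); for n = 2 this also sees the coefficients at y^4 and x^2 y^2, which
  testing against y^2 cancels.\<close>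

lemma An_aut_y_relation_bicoeff: "bicoeff (p^n * q^2 - q^(n+2)) (n+2) 1 = 0"
proof -
  let ?R = "p^n * q^2 - q^(n+2)"
  have R: "omega n (r * ?R) = 0" for r
    by (rule omega_An_ideal_mult[OF n2 An_aut_y_relation_in_ideal])
  show ?thesis
  proof (cases "n = 2")
    case True
    have vq: "vanishes_below 2 (ycoeff 0 q)"
      by (rule vanishes_below_ycoeff_2[OF q00 An_aut_bicoeff_q_1_0])
    have "vanishes_below (n*1 + 2*2) (ycoeff 0 p ^ n * ycoeff 0 q ^ 2)"
      by (intro vanishes_below_mult vanishes_below_power vanishes_below_ycoeff_1 p00 vq)
    moreover have "vanishes_below ((n+2)*2) (ycoeff 0 q ^ (n+2))"
      by (intro vanishes_below_power vq)
    ultimately have "coeff (ycoeff 0 (p^n * q^2)) (n+2) = 0" "coeff (ycoeff 0 (q^(n+2))) (n+2) = 0"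
      by (auto simp: ycoeff_0_mult ycoeff_0_power intro!: vanishes_belowD)
    then have x0: "bicoeff ?R (n+2) 0 = 0"
      by (simp add: coeff_ycoeff)
    have "bicoeff ?R 0 4 + bicoeff ?R 2 2 + bicoeff ?R 4 1 = 0"
      using R[of "bimonom 2 0"] True by (simp add: omega_bimonom_mult del: bicoeff_diff)
    moreover have "bicoeff ?R 0 4 + bicoeff ?R 2 2 + bicoeff ?R 4 0 = 0"
      using R[of "bimonom 0 2"] True by (simp add: omega_bimonom_mult del: bicoeff_diff)
    ultimately show ?thesis
      using x0 True by simp
  next
    case False
    have "wvanishes_below 1 1 (n+2) (p^n * q^2)"
      using wvanishes_below_mult[OF wvanishes_below_power[OF wvanishes_below_1[OF _ _ p00], of 1 1 n]
          wvanishes_below_power[OF wvanishes_below_1[OF _ _ q00], of 1 1 2]] by simp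
    moreover have "wvanishes_below 1 1 (n+2) (q^(n+2))"
      using wvanishes_below_power[OF wvanishes_below_1[OF _ _ q00], of 1 1 "n+2"] by simp
    ultimately have "bicoeff ?R 2 2 = 0"
      using False n2 by (intro wvanishes_belowD[OF wvanishes_below_diff]) auto
    moreover have "2*n-2 \<noteq> 0" "\<not> 2*n-2 \<le> n" "2*n-2 \<le> 2*n" "2*n-(2*n-2) = 2"
      "2*n-2 \<le> 3*n" "3*n-(2*n-2) = n+2"
      using False n2 by auto
    ultimately show ?thesis
      using R[of "bimonom (2*n-2) 0"] by (simp add: omega_bimonom_mult)
  qed
qed

lemma An_aut_bicoeff_q_2_0:
  assumes "(2::'a) \<noteq> 0"
  shows "bicoeff q 2 0 = 0"
  using An_aut_y_relation_bicoeff bicoeff_y_relation_image[OF n2 p00 An_aut_bicoeff_p_0_1 q00 An_aut_bicoeff_q_1_0]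
    An_aut_bicoeff_p_1_0 An_aut_bicoeff_q_0_1 assms by simp

lemma An_aut_relation_x_linear:
  assumes "(2::'a) \<noteq> 0"
  shows "of_nat (2*n+1) * bicoeff p 1 0 ^ (2*n) * bicoeff p 1 1
    = of_nat (n+1) * bicoeff p 1 0 * bicoeff q 0 1 ^ n * bicoeff q 0 2 + bicoeff p 1 1 * bicoeff q 0 1 ^ (n+1)"
proof -
  have "omega n (bimonom (n-1) 0 * (p^(2*n+1) - p * q^(n+1))) = 0"
    by (rule omega_An_ideal_mult[OF n2 An_aut_x_relation_in_ideal])
  then show ?thesis
    using omega_x_mult_power_2n1[OF n2 p00 An_aut_bicoeff_p_0_1]
      omega_x_mult_mult_power[OF n2 p00 An_aut_bicoeff_p_0_1 q00 An_aut_bicoeff_q_1_0 An_aut_bicoeff_q_2_0[OF assms]]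
    by (simp add: right_diff_distrib omega_diff)
qed

lemma An_aut_relation_y_x_linear:
  assumes "(2::'a) \<noteq> 0"
  shows "of_nat (2*n+1) * bicoeff q 0 1 ^ (2*n) * bicoeff q 0 2
    = of_nat (3*n) * bicoeff p 1 0 ^ (3*n-1) * bicoeff p 1 1"
proof -
  have "omega n (q^(2*n+1) - p^(3*n)) = 0"
    by (rule omega_An_ideal[OF n2 An_aut_y_x_relation_in_ideal])
  then show ?thesis
    using omega_power_2n1[OF n2 q00 An_aut_bicoeff_q_1_0 An_aut_bicoeff_q_2_0[OF assms]] omega_power_3n[OF n2 p00 An_aut_bicoeff_p_0_1]
    by (simp add: omega_diff)
qed

lemma An_aut_bicoeff_q_0_2:
  assumes "of_nat n \<noteq> (0::'a)" "of_nat (n-1) \<noteq> (0::'a)"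
  shows "bicoeff q 0 2 = 0"
proof -
  have two: "(2::'a) \<noteq> 0"
    by (rule two_ne_0_if_consecutive_ne_0[OF assms])
  show ?thesis
    by (rule An_relations_imp_eq_0[OF n2 An_aut_bicoeff_q_0_1 An_aut_bicoeff_p_1_0 An_aut_relation_2n An_aut_relation_3n
          An_aut_relation_x_linear[OF two] An_aut_relation_y_x_linear[OF two] assms])
qed

text \<open>y^(2n+1) lies in the first hyperplane, but as bicoeff q 0 2 = 0,
  omega((1 + y) q^(2n+1)) = (bicoeff q 0 1)^(2n+1).\<close>

lemma An_aut_image_omega_hyperplane:
  assumes "of_nat n \<noteq> (0::'a)" "of_nat (n-1) \<noteq> (0::'a)"
  shows "f ` omega_hyperplane n 1 \<noteq> omega_hyperplane n (1 + varY)"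
proof
  assume image: "f ` omega_hyperplane n 1 = omega_hyperplane n (1 + varY)"
  have "cls (An_ideal n) (bimonom 0 (2*n+1)) \<in> omega_hyperplane n (1 :: 'a bipoly)"
    using n2 by (simp add: cls_in_omega_hyperplane_iff bicoeff_bimonom omega_def)
  then have "cls (An_ideal n) (q^(2*n+1)) \<in> omega_hyperplane n (1 + varY)"
    using image An_aut_cls_bimonom[of 0 "2*n+1"] by force
  then have "omega n (q^(2*n+1)) + omega n (bimonom 0 1 * q^(2*n+1)) = 0"
    by (simp add: cls_in_omega_hyperplane_iff[OF n2] distrib_right omega_add varY_eq_bimonom)
  then have "bicoeff q 0 1 ^ (2*n+1) = 0"
    using omega_power_2n1[OF n2 q00 An_aut_bicoeff_q_1_0] omega_y_mult_power_2n1[OF n2 q00 An_aut_bicoeff_q_1_0]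
      An_aut_bicoeff_q_0_2[OF assms] An_aut_bicoeff_q_2_0[OF two_ne_0_if_consecutive_ne_0[OF assms]] by simp
  then show False
    using An_aut_bicoeff_q_0_1 by simp
qed

end

theorem corollary1p3:
  fixes n :: nat
  assumes "n \<ge> 2"
    and "CHAR('a::field) = 0 \<or> (coprime CHAR('a) n \<and> coprime CHAR('a) (n - 1))"
  shows "\<not> prop_AH (An_ideal n :: 'a bipoly set)"
proof
  assume AH: "prop_AH (An_ideal n :: 'a bipoly set)"
  have char: "of_nat n \<noteq> (0::'a)" "of_nat (n - 1) \<noteq> (0::'a)"
    using of_nat_ne_0_if_coprime_CHAR[of n] of_nat_ne_0_if_coprime_CHAR[of "n - 1"] assms by auto
  obtain f where f: "max_aut (An_ideal n) f"
      "f ` omega_hyperplane n 1 = omega_hyperplane n (1 + varY :: 'a bipoly)"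
    using AH[unfolded prop_AH_def, rule_format, OF conjI[OF compl_hyperplane_omega_hyperplane_1
          compl_hyperplane_omega_hyperplane_1_plus_y], OF assms(1) assms(1)] by blast
  have "cls (An_ideal n) varX \<in> qmax (An_ideal n)" "cls (An_ideal n) varY \<in> qmax (An_ideal n)"
    by (simp_all add: cls_An_ideal_in_qmax_iff varX_eq_bimonom varY_eq_bimonom bicoeff_bimonom)
  then obtain p q where "f (cls (An_ideal n) varX) = cls (An_ideal n) p"
      "f (cls (An_ideal n) varY) = cls (An_ideal n) q"
      "bicoeff p 0 0 = 0" "bicoeff q 0 0 = 0"
    by (metis max_aut_in_qmax[OF f(1)] qmax_iff)
  from An_aut_image_omega_hyperplane[OF assms(1) f(1) this char] f(2) show False
    by simp
qed

end
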